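(* There exist constants $C\ge0$ and $\alpha>0$ such that for all $m\in\mathbb Z^+$ and all $x\ge0$, \[\mathbb P\big(\|X^m\|\ge x\sqrt m\big)\le Ce^{-\alpha x^2},\] where $X^m$ is the depth-first walk of a uniformly random labelled tree $T_m$ on $[m]$ and $\|X^m\|=\max_{0\le i<m}X^m(i)$.
   Context: Ordered depth-first search ${\bf oDFS}(T)$ for a tree $T$ on $[m]$: set $\mathcal O_0=(1)$ (ordered list), $\mathcal A_0=\emptyset$; for $i=0,\dots,m-1$ let $v_i$ be the first element of $\mathcal O_i$, $\mathcal N_i$ the neighbours of $v_i$ outside $\mathcal A_i\cup\mathcal O_i$, $\mathcal A_{i+1}=\mathcal A_i\cup\{v_i\}$, and $\mathcal O_{i+1}$ obtained by deleting $v_i$ from the front of $\mathcal O_i$ and placing $\mathcal N_i$ in increasing order at the front. The depth-first walk is $X(i)=|\mathcal O_i|-1$, $0\le i<m$. *)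

theory Defs
  imports "HOL-Probability.Probability"
begin

definition adj :: "nat set set \<Rightarrow> nat \<Rightarrow> nat \<Rightarrow> bool" where
  "adj E u v \<longleftrightarrow> {u, v} \<in> E \<and> u \<noteq> v"

definition is_cycle :: "nat set set \<Rightarrow> nat list \<Rightarrow> bool" where
  "is_cycle E vs \<longleftrightarrow> length vs \<ge> 3 \<and> distinct vs \<and>
     (\<forall>i < length vs. adj E (vs ! i) (vs ! ((i + 1) mod length vs)))"

definition is_tree :: "nat set \<Rightarrow> nat set set \<Rightarrow> bool" where
  "is_tree V E \<longleftrightarrow>
     (\<forall>e \<in> E. e \<subseteq> V \<and> card e = 2) \<and>
     (\<forall>u \<in> V. \<forall>v \<in> V. (u, v) \<in> {(a, b). adj E a b}\<^sup>*) \<and>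
     (\<nexists>vs. is_cycle E vs)"

definition trees :: "nat \<Rightarrow> nat set set set" where
  "trees m = {E. is_tree {1..m} E}"

text \<open>One step of the ordered depth-first search: state (O_i, A_i).\<close>
definition odfs_step :: "nat set set \<Rightarrow> nat list \<times> nat set \<Rightarrow> nat list \<times> nat set" where
  "odfs_step E s = (let Q = fst s; A = snd s; v = hd Q;
      N = sorted_list_of_set {w. adj E v w \<and> w \<notin> A \<and> w \<notin> set Q}
    in (N @ tl Q, insert v A))"

definition odfs_state :: "nat set set \<Rightarrow> nat \<Rightarrow> nat list \<times> nat set" where
  "odfs_state E i = (odfs_step E ^^ i) ([1], {})"

text \<open>Depth-first walk X(i) = |O_i| - 1 (O_i is nonempty for i < m on a tree).\<close>
definition dfw :: "nat set set \<Rightarrow> nat \<Rightarrow> int" where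
  "dfw E i = int (length (fst (odfs_state E i))) - 1"

definition dfw_norm :: "nat \<Rightarrow> nat set set \<Rightarrow> real" where
  "dfw_norm m E = real_of_int (Max ((dfw E) ` {0..<m}))"

end

theory Submission
  imports Defs "HOL-Library.Transitive_Closure_Table"
begin

(* A tree on [m] is encoded by its "code" w : {2..m} -> [0,m): w u is the time at which the
   ordered depth-first search explores the parent of u.  Every code w defines a counting walk
   walk m w i = #{u. w u < i} - i, a sum of m-1 independent uniform "birth times" minus time;
   the code comes from a tree iff the walk stays >= 0 on [0,m) ("valid" codes), and then the
   walk is exactly the depth-first walk X of the tree.  The proof has four parts:
   (1) cycle lemma: rotations of a code preserve codes and exactly one rotation is valid up to
       the period; hence at least m^(m-1)/m codes are valid, and a large value of a valid
       walk produces, in each of its m rotations, a large absolute value of the walk;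
   (2) Chernoff bounds for the binomially distributed increments of the walk over all codes;
   (3) dyadic chaining, giving a Gaussian tail for max |walk| over all codes;
   (4) the search on a valid code is the ordered DFS of the tree built from the code, and this
       gives a bijection between valid codes and trees that carries walk to X.
   The theorem follows with C = 16 e^16 and alpha = 1/4096: a uniform tree is a uniform valid
   code, and the proportion of valid codes with a large maximum is controlled by (1)-(3). *)

section \<open>Codes and their walks\<close>

text \<open>Codes: maps from the non-root vertices {2..m} to exploration times in [0,m).\<close>
definition codes :: "nat \<Rightarrow> (nat \<Rightarrow> nat) set" where
  "codes m = PiE {2..m} (\<lambda>_. {0..<m})"

text \<open>Number of vertices whose parent is explored before time i.\<close>
definition born :: "nat \<Rightarrow> (nat \<Rightarrow> nat) \<Rightarrow> nat \<Rightarrow> nat" where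
  "born m w i = card {u\<in>{2..m}. w u < i}"

text \<open>The walk of a code: vertices discovered minus vertices explored.\<close>
definition walk :: "nat \<Rightarrow> (nat \<Rightarrow> nat) \<Rightarrow> nat \<Rightarrow> int" where
  "walk m w i = int (born m w i) - int i"

definition valid :: "nat \<Rightarrow> (nat \<Rightarrow> nat) \<Rightarrow> bool" where
  "valid m w \<longleftrightarrow> (\<forall>i<m. walk m w i \<ge> 0)"

definition cshift :: "nat \<Rightarrow> nat \<Rightarrow> (nat \<Rightarrow> nat) \<Rightarrow> (nat \<Rightarrow> nat)" where
  "cshift m s w = (\<lambda>u. if u \<in> {2..m} then (w u + s) mod m else undefined)"

lemma codes_lt: "w \<in> codes m \<Longrightarrow> u \<in> {2..m} \<Longrightarrow> w u < m"
  by (auto simp: codes_def)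

lemma finite_codes: "finite (codes m)"
  by (auto simp: codes_def intro!: finite_PiE)

lemma card_codes: "card (codes m) = m ^ (m - 1)"
  by (simp add: codes_def card_PiE)

lemma born_mono: "i \<le> j \<Longrightarrow> born m w i \<le> born m w j"
  unfolding born_def by (rule card_mono) auto

lemma born_le: "born m w i \<le> m - 1"
proof -
  have "born m w i \<le> card {2..m}" unfolding born_def by (rule card_mono) auto
  thus ?thesis by simp
qed

lemma born_m: "w \<in> codes m \<Longrightarrow> born m w m = m - 1"
proof -
  assume "w \<in> codes m"
  hence "{u\<in>{2..m}. w u < m} = {2..m}" using codes_lt by blast
  thus ?thesis by (simp add: born_def)
qed

lemma walk_0[simp]: "walk m w 0 = 0"
  by (simp add: walk_def born_def)

text \<open>Every walk ends at -1: this is what makes exactly one rotation valid.\<close>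
lemma walk_m: "w \<in> codes m \<Longrightarrow> 1 \<le> m \<Longrightarrow> walk m w m = -1"
  by (simp add: walk_def born_m)

section \<open>Rotations and the cycle lemma\<close>

lemma cshift_codes: "w \<in> codes m \<Longrightarrow> 1 \<le> m \<Longrightarrow> cshift m s w \<in> codes m"
  by (auto simp: codes_def cshift_def)

lemma cshift_cshift: "w \<in> codes m \<Longrightarrow> cshift m a (cshift m b w) = cshift m (a + b) w"
  by (auto simp: cshift_def codes_def fun_eq_iff mod_add_left_eq mod_add_right_eq ac_simps)

lemma cshift_mod: "cshift m (s mod m) w = cshift m s w"
  by (auto simp: cshift_def fun_eq_iff mod_add_right_eq)

lemma cshift_m: "w \<in> codes m \<Longrightarrow> cshift m m w = w"
  by (auto simp: cshift_def codes_def fun_eq_iff PiE_def extensional_def Pi_def)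

lemma cshift_inv: "w \<in> codes m \<Longrightarrow> r \<le> m \<Longrightarrow> cshift m r (cshift m (m - r) w) = w"
  by (simp add: cshift_cshift cshift_m)

lemma cshift_inv2: "w \<in> codes m \<Longrightarrow> r \<le> m \<Longrightarrow> cshift m (m - r) (cshift m r w) = w"
  by (simp add: cshift_cshift cshift_m)

lemma cshift_lt_iff:
  assumes w: "w \<in> codes m" and u: "u \<in> {2..m}" and "r \<le> m"
  shows "cshift m (m - r) w u < i \<longleftrightarrow> (r \<le> w u \<and> w u - r < i) \<or> (w u < r \<and> w u + m - r < i)"
proof -
  have "w u < m" by (rule codes_lt[OF w u])
  hence "(w u + (m - r)) mod m = (if r \<le> w u then w u - r else w u + m - r)"
    using assms(3) by (auto simp: le_mod_geq)
  thus ?thesis using u by (auto simp: cshift_def)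
qed

lemma walk_cshift_nowrap:
  assumes w: "w \<in> codes m" and "r + i \<le> m"
  shows "walk m (cshift m (m - r) w) i = walk m w (r + i) - walk m w r"
proof -
  have "{u\<in>{2..m}. cshift m (m - r) w u < i} = {u\<in>{2..m}. w u < r + i} - {u\<in>{2..m}. w u < r}"
    using assms codes_lt[OF w] cshift_lt_iff[OF w _ , of _ r i] by auto
  hence "born m (cshift m (m - r) w) i = card ({u\<in>{2..m}. w u < r + i} - {u\<in>{2..m}. w u < r})"
    by (simp add: born_def)
  also have "\<dots> = born m w (r + i) - born m w r"
    unfolding born_def by (subst card_Diff_subset) auto
  finally show ?thesis using born_mono[of r "r + i" m w] by (simp add: walk_def)
qed

lemma born_cshift_wrap:
  assumes w: "w \<in> codes m" and "m < r + i" "r \<le> m" "i \<le> m"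
  shows "born m (cshift m (m - r) w) i = born m w (r + i - m) + (m - 1 - born m w r)"
proof -
  let ?lo = "{u\<in>{2..m}. w u < r + i - m}" and ?hi = "{2..m} - {u\<in>{2..m}. w u < r}"
  have "{u\<in>{2..m}. cshift m (m - r) w u < i} = ?lo \<union> ?hi"
  proof (rule set_eqI)
    fix u show "u \<in> {u\<in>{2..m}. cshift m (m - r) w u < i} \<longleftrightarrow> u \<in> ?lo \<union> ?hi"
    proof (cases "u \<in> {2..m}")
      case True
      thus ?thesis using cshift_lt_iff[OF w True assms(3), of i] codes_lt[OF w True] assms by auto
    qed auto
  qed
  hence "born m (cshift m (m - r) w) i = card (?lo \<union> ?hi)"
    by (simp add: born_def)
  also have "\<dots> = card ?lo + card ?hi"
    using assms by (intro card_Un_disjoint) auto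
  also have "card ?hi = m - 1 - born m w r"
    unfolding born_def by (subst card_Diff_subset) auto
  finally show ?thesis by (simp add: born_def)
qed

lemma walk_cshift_wrap:
  assumes w: "w \<in> codes m" and "m < r + i" "r \<le> m" "i \<le> m"
  shows "walk m (cshift m (m - r) w) i = walk m w (r + i - m) - 1 - walk m w r"
  using born_cshift_wrap[OF assms] born_le[of m w r] assms by (simp add: walk_def)

text \<open>A nontrivial rotation of a valid code is not valid, since the walk ends at -1.\<close>
lemma valid_cshift_unique:
  assumes w: "w \<in> codes m" and v: "valid m w" and vs: "valid m (cshift m s w)" and m: "1 \<le> m"
  shows "s mod m = 0"
proof (rule ccontr)
  assume ne: "s mod m \<noteq> 0"
  define r where "r = m - s mod m"
  have r: "0 < r" "r < m" using ne m by (auto simp: r_def)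
  have "walk m (cshift m (m - r) w) (m - r) = walk m w m - walk m w r"
    using walk_cshift_nowrap[OF w, of r "m - r"] r by simp
  moreover have "valid m (cshift m (m - r) w)"
    using vs m by (simp add: r_def cshift_mod less_imp_le)
  hence "walk m (cshift m (m - r) w) (m - r) \<ge> 0" using r unfolding valid_def by auto
  moreover have "walk m w r \<ge> 0" using v r unfolding valid_def by auto
  ultimately show False using walk_m[OF w m] by simp
qed

text \<open>Cycle lemma: rotating to start just after the last minimum of the walk gives a valid code.\<close>
lemma exists_valid_cshift:
  assumes w: "w \<in> codes m" and m: "1 \<le> m"
  shows "\<exists>r\<in>{1..m}. valid m (cshift m (m - r) w)"
proof -
  define \<mu> where "\<mu> = Min (walk m w ` {1..m})"
  have ge: "walk m w j \<ge> \<mu>" if "j \<in> {1..m}" for j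
    unfolding \<mu>_def using that by (intro Min_le) auto
  have "\<mu> \<in> walk m w ` {1..m}" unfolding \<mu>_def using m by (intro Min_in) auto
  then obtain r0 where r0: "r0 \<in> {1..m}" "walk m w r0 = \<mu>" by auto
  define r where "r = (LEAST r. r \<in> {1..m} \<and> walk m w r = \<mu>)"
  have r: "r \<in> {1..m}" "walk m w r = \<mu>"
    using LeastI[of "\<lambda>r. r \<in> {1..m} \<and> walk m w r = \<mu>" r0] r0 unfolding r_def by auto
  have less: "walk m w j > \<mu>" if "j \<in> {1..m}" "j < r" for j
    using ge[OF that(1)] not_less_Least[of j "\<lambda>r. r \<in> {1..m} \<and> walk m w r = \<mu>"] that
    unfolding r_def by fastforce
  have "walk m (cshift m (m - r) w) i \<ge> 0" if i: "i < m" for i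
  proof (cases "r + i \<le> m")
    case True
    thus ?thesis using walk_cshift_nowrap[OF w True] ge[of "r + i"] r by auto
  next
    case False
    thus ?thesis using walk_cshift_wrap[OF w, of r i] less[of "r + i - m"] r i by auto
  qed
  hence "valid m (cshift m (m - r) w)" unfolding valid_def by blast
  thus ?thesis using r(1) by blast
qed

lemma card_valid_lower:
  assumes m: "1 \<le> m"
  shows "m ^ (m - 1) \<le> m * card {w\<in>codes m. valid m w}"
proof -
  define V where "V = {w\<in>codes m. valid m w}"
  define rr where "rr w = (SOME r. r \<in> {1..m} \<and> valid m (cshift m (m - r) w))" for w
  have rr: "rr w \<in> {1..m} \<and> valid m (cshift m (m - rr w) w)" if "w \<in> codes m" for w
  proof -
    have "\<exists>r. r \<in> {1..m} \<and> valid m (cshift m (m - r) w)"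
      using exists_valid_cshift[OF that m] by blast
    thus ?thesis unfolding rr_def by (rule someI_ex)
  qed
  define f where "f w = (cshift m (m - rr w) w, rr w)" for w
  have inj: "inj_on f (codes m)"
  proof (rule inj_onI)
    fix w1 w2 assume w1: "w1 \<in> codes m" and w2: "w2 \<in> codes m" and eq: "f w1 = f w2"
    hence "rr w1 = rr w2" by (simp add: f_def)
    hence "cshift m (rr w1) (cshift m (m - rr w1) w1) = cshift m (rr w2) (cshift m (m - rr w2) w2)"
      using eq by (simp add: f_def)
    thus "w1 = w2" using cshift_inv[OF w1] cshift_inv[OF w2] rr[OF w1] rr[OF w2] by simp
  qed
  have "f ` codes m \<subseteq> V \<times> {1..m}"
    using rr cshift_codes[OF _ m] by (auto simp: f_def V_def)
  moreover have "finite (V \<times> {1..m})" using finite_codes unfolding V_def by auto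
  ultimately have "card (f ` codes m) \<le> card (V \<times> {1..m})"
    by (intro card_mono)
  hence "card (codes m) \<le> card (V \<times> {1..m})" by (simp add: card_image[OF inj])
  thus ?thesis by (simp add: card_codes card_cartesian_product V_def mult.commute)
qed

lemma cshift_valid_inj:
  assumes m: "1 \<le> m"
    and v1: "v1 \<in> codes m" "valid m v1" "r1 \<in> {1..m}"
    and v2: "v2 \<in> codes m" "valid m v2" "r2 \<in> {1..m}"
    and eq: "cshift m r1 v1 = cshift m r2 v2"
  shows "v1 = v2 \<and> r1 = r2"
proof -
  have "cshift m (m - r2 + r1) v1 = cshift m (m - r2) (cshift m r1 v1)"
    by (rule cshift_cshift[OF v1(1), symmetric])
  also have "\<dots> = v2" using cshift_inv2[OF v2(1), of r2] eq v2 by simp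
  finally have unrotate: "cshift m (m - r2 + r1) v1 = v2" .
  hence "(m - r2 + r1) mod m = 0" using valid_cshift_unique[OF v1(1) v1(2) _ m] v2 by auto
  then obtain q where q: "m - r2 + r1 = m * q" by auto
  have "0 < m - r2 + r1" "m - r2 + r1 < m * 2" using v1(3) v2(3) by auto
  hence "0 < m * q" "m * q < m * 2" using q by simp_all
  hence "0 < q" "q < 2" by (simp_all add: mult_less_cancel1)
  hence "q = 1" by simp
  hence "r1 = r2" using q v1(3) v2(3) by auto
  thus ?thesis using unrotate cshift_m[OF v1(1)] v2(3) by simp
qed

lemma cshift_large_walk:
  fixes z :: real
  assumes v: "v \<in> codes m" and m: "1 \<le> m" and r: "r \<in> {1..m}"
    and i: "i < m" "z \<le> real_of_int (walk m v i)"
  shows "\<exists>j\<le>m. z \<le> 2 * \<bar>real_of_int (walk m (cshift m r v) j)\<bar>"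
proof -
  define x where "x = cshift m r v"
  have xw: "x \<in> codes m" using cshift_codes[OF v m] by (simp add: x_def)
  have vx: "v = cshift m (m - r) x" using cshift_inv2[OF v] r by (simp add: x_def)
  have "\<exists>a\<le>m. \<exists>b\<le>m. z \<le> real_of_int (walk m x a - walk m x b)"
  proof (cases "r + i \<le> m")
    case True
    hence "z \<le> real_of_int (walk m x (r + i) - walk m x r)" using walk_cshift_nowrap[OF xw True] vx i by simp
    moreover have "r \<le> m" using r by simp
    ultimately show ?thesis using True by blast
  next
    case False
    hence "walk m v i = walk m x (r + i - m) - 1 - walk m x r"
      using vx walk_cshift_wrap[OF xw] r i by simp
    thus ?thesis using i r by (intro exI[of _ "r + i - m"] exI[of _ r]) auto
  qed
  then obtain a b where ab: "a \<le> m" "b \<le> m" "z \<le> real_of_int (walk m x a - walk m x b)" by auto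
  hence "z \<le> 2 * \<bar>real_of_int (walk m x a)\<bar> \<or> z \<le> 2 * \<bar>real_of_int (walk m x b)\<bar>" by linarith
  thus ?thesis using ab unfolding x_def by blast
qed

lemma card_valid_bad:
  fixes z :: real
  assumes m: "1 \<le> m"
  shows "m * card {w\<in>codes m. valid m w \<and> (\<exists>i<m. z \<le> real_of_int (walk m w i))}
     \<le> card {u\<in>codes m. \<exists>i\<le>m. z \<le> 2 * \<bar>real_of_int (walk m u i)\<bar>}"
proof -
  define Vb where "Vb = {w\<in>codes m. valid m w \<and> (\<exists>i<m. z \<le> real_of_int (walk m w i))}"
  define g where "g = (\<lambda>(v, r). cshift m r v)"
  have inj: "inj_on g (Vb \<times> {1..m})"
    using cshift_valid_inj[OF m] by (intro inj_onI) (auto simp: g_def Vb_def)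
  have "g ` (Vb \<times> {1..m}) \<subseteq> {u\<in>codes m. \<exists>i\<le>m. z \<le> 2 * \<bar>real_of_int (walk m u i)\<bar>}"
    using cshift_large_walk[OF _ m] cshift_codes[OF _ m] by (auto simp: g_def Vb_def)
  hence "card (g ` (Vb \<times> {1..m})) \<le> card {u\<in>codes m. \<exists>i\<le>m. z \<le> 2 * \<bar>real_of_int (walk m u i)\<bar>}"
    using finite_codes by (intro card_mono) auto
  hence "card (Vb \<times> {1..m}) \<le> card {u\<in>codes m. \<exists>i\<le>m. z \<le> 2 * \<bar>real_of_int (walk m u i)\<bar>}"
    using card_image[OF inj] by simp
  thus ?thesis by (simp add: card_cartesian_product Vb_def mult.commute)
qed

section \<open>Chernoff bounds for the increments of the walk\<close>

text \<open>Over all codes, an increment of born is a sum of m-1 independent indicators, each with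
  success probability (b-a)/m.  We count instead of using probability: the number of codes
  plays the role of the total mass m^(m-1).\<close>

lemma born_diff_card:
  assumes "a \<le> b"
  shows "born m w b - born m w a = card {u\<in>{2..m}. a \<le> w u \<and> w u < b}"
proof -
  have "{u\<in>{2..m}. a \<le> w u \<and> w u < b} = {u\<in>{2..m}. w u < b} - {u\<in>{2..m}. w u < a}"
    using assms by auto
  moreover have "card ({u\<in>{2..m}. w u < b} - {u\<in>{2..m}. w u < a})
      = card {u\<in>{2..m}. w u < b} - card {u\<in>{2..m}. w u < a}"
    by (rule card_Diff_subset) (use assms in auto)
  ultimately show ?thesis unfolding born_def by simp
qed

lemma exp_card:
  fixes s :: real
  assumes "finite A"
  shows "exp (s * real (card {u\<in>A. P u})) = (\<Prod>u\<in>A. if P u then exp s else 1)"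
  using assms by (simp add: prod.If_cases Int_def exp_of_nat_mult[symmetric] mult.commute)

lemma sum_if_interval:
  fixes e :: real
  assumes ab: "a \<le> b" "b \<le> m"
  shows "(\<Sum>y\<in>{0..<m}. (if a \<le> y \<and> y < b then e else 1)) = real (b - a) * e + (real m - real (b - a))"
proof -
  have "(\<Sum>y\<in>{0..<m}. (if a \<le> y \<and> y < b then e else 1))
      = (\<Sum>y\<in>{0..<m} \<inter> {y. a \<le> y \<and> y < b}. e) + (\<Sum>y\<in>{0..<m} \<inter> - {y. a \<le> y \<and> y < b}. 1)"
    by (rule sum.If_cases) simp
  also have "{0..<m} \<inter> {y. a \<le> y \<and> y < b} = {a..<b}" using ab by auto
  also have "{0..<m} \<inter> - {y. a \<le> y \<and> y < b} = {0..<m} - {a..<b}" by auto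
  also have "card ({0..<m} - {a..<b}) = m - (b - a)" using ab by (subst card_Diff_subset) auto
  hence "(\<Sum>y\<in>{0..<m} - {a..<b}. (1::real)) = real m - real (b - a)" using ab by simp
  finally show ?thesis by simp
qed

lemma mgf_codes:
  fixes s :: real
  assumes ab: "a \<le> b" "b \<le> m"
  shows "(\<Sum>w\<in>codes m. exp (s * real (born m w b - born m w a)))
       = (real (b - a) * exp s + (real m - real (b - a))) ^ (m - 1)"
proof -
  define f where "f y = (if a \<le> y \<and> y < b then exp s else (1::real))" for y
  have "(\<Sum>w\<in>codes m. exp (s * real (born m w b - born m w a)))
      = (\<Sum>w\<in>codes m. \<Prod>u\<in>{2..m}. f (w u))"
    using exp_card[of "{2..m}" s] born_diff_card[OF ab(1)] by (intro sum.cong) (simp_all add: f_def)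
  also have "\<dots> = (\<Prod>u\<in>{2..m}. \<Sum>y\<in>{0..<m}. f y)"
    unfolding codes_def by (rule prod_sum_PiE[symmetric]) auto
  also have "\<dots> = (real (b - a) * exp s + (real m - real (b - a))) ^ (m - 1)"
    using sum_if_interval[OF ab] by (simp add: f_def)
  finally show ?thesis .
qed

text \<open>Poisson-type bound for the binomial moment generating function, via 1 + x \<le> e^x.\<close>
lemma mgf_bound:
  fixes s :: real
  assumes ab: "a \<le> b" "b \<le> m" and m: "1 \<le> m"
  shows "(\<Sum>w\<in>codes m. exp (s * real (born m w b - born m w a)))
       \<le> real m ^ (m - 1) * exp (real (m - 1) * (real (b - a) / real m) * (exp s - 1))"
proof -
  define \<beta> where "\<beta> = real (b - a) / real m"
  have b0: "0 \<le> \<beta>" "\<beta> \<le> 1" using ab m by (auto simp: \<beta>_def)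
  have base: "real (b - a) * exp s + (real m - real (b - a)) = real m * (1 + \<beta> * (exp s - 1))"
    using m by (simp add: \<beta>_def field_simps)
  have "\<beta> * (exp s - 1) \<ge> \<beta> * (-1)" using b0 by (intro mult_left_mono) auto
  hence nn: "0 \<le> 1 + \<beta> * (exp s - 1)" using b0 by simp
  have "(real (b - a) * exp s + (real m - real (b - a))) ^ (m - 1)
      = real m ^ (m - 1) * (1 + \<beta> * (exp s - 1)) ^ (m - 1)"
    by (simp add: base power_mult_distrib)
  also have "\<dots> \<le> real m ^ (m - 1) * exp (\<beta> * (exp s - 1)) ^ (m - 1)"
    by (intro mult_left_mono power_mono nn) (auto simp: add.commute)
  also have "exp (\<beta> * (exp s - 1)) ^ (m - 1) = exp (real (m - 1) * \<beta> * (exp s - 1))"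
    by (simp add: exp_of_nat_mult[symmetric] mult.assoc)
  finally show ?thesis using mgf_codes[OF ab, of s] by (simp add: \<beta>_def)
qed

lemma card_exp_markov:
  fixes s c :: real and X :: "'a \<Rightarrow> real"
  assumes "finite W" "\<And>w. w \<in> W \<Longrightarrow> P w \<Longrightarrow> c \<le> s * X w"
  shows "real (card {w\<in>W. P w}) * exp c \<le> (\<Sum>w\<in>W. exp (s * X w))"
proof -
  have "real (card {w\<in>W. P w}) * exp c = (\<Sum>w\<in>{w\<in>W. P w}. exp c)" by simp
  also have "\<dots> \<le> (\<Sum>w\<in>{w\<in>W. P w}. exp (s * X w))"
    using assms by (intro sum_mono) auto
  also have "\<dots> \<le> (\<Sum>w\<in>W. exp (s * X w))"
    using assms by (intro sum_mono2) auto
  finally show ?thesis .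
qed

lemma exp_neg_bound:
  fixes s :: real
  assumes "0 \<le> s"
  shows "exp (- s) \<le> 1 - s + s\<^sup>2"
proof -
  have "exp (- s) \<le> 1 / (1 + s)"
    using assms exp_ge_add_one_self[of s] by (simp add: exp_minus field_simps)
  also have "1 \<le> (1 - s + s\<^sup>2) * (1 + s)" using assms by (simp add: power2_eq_square algebra_simps)
  hence "1 / (1 + s) \<le> 1 - s + s\<^sup>2" using assms by (simp add: field_simps)
  finally show ?thesis .
qed

lemma chernoff_exponent_upper:
  fixes lam t :: real
  assumes "0 < lam" "0 \<le> t" "t \<le> lam"
  defines "s \<equiv> t / (2 * lam)"
  shows "lam * (exp s - 1) - s * (lam + t) \<le> - (t\<^sup>2 / (4 * lam))"
proof -
  have s: "0 \<le> s" "s \<le> 1/2" using assms by (auto simp: s_def field_simps)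
  have "exp s \<le> 1 + s + s\<^sup>2" using s by (intro exp_bound) auto
  hence "lam * (exp s - 1) \<le> lam * (s + s\<^sup>2)" using assms by (intro mult_left_mono) auto
  moreover have "lam * (s + s\<^sup>2) - s * (lam + t) = - (t\<^sup>2 / (4 * lam))"
    using assms by (simp add: s_def power2_eq_square field_simps)
  ultimately show ?thesis by linarith
qed

lemma chernoff_exponent_lower:
  fixes lam t :: real
  assumes "0 < lam" "0 \<le> t"
  defines "s \<equiv> t / (2 * lam)"
  shows "lam * (exp (- s) - 1) + s * (lam - t) \<le> - (t\<^sup>2 / (4 * lam))"
proof -
  have "0 \<le> s" using assms by (simp add: s_def)
  hence "exp (- s) - 1 \<le> - s + s\<^sup>2" using exp_neg_bound by fastforce
  hence "lam * (exp (- s) - 1) \<le> lam * (- s + s\<^sup>2)"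
    using assms by (intro mult_left_mono) auto
  moreover have "lam * (- s + s\<^sup>2) + s * (lam - t) = - (t\<^sup>2 / (4 * lam))"
    using assms by (simp add: s_def power2_eq_square field_simps)
  ultimately show ?thesis by linarith
qed

lemma mult_exp_le_shift:
  fixes x N A B E :: real
  assumes "x * exp A \<le> N * exp B" "B - A \<le> E" "0 \<le> N"
  shows "x \<le> N * exp E"
proof -
  have "x \<le> N * exp B / exp A" using assms(1) by (simp add: pos_le_divide_eq)
  also have "\<dots> = N * exp (B - A)" by (simp add: exp_diff)
  also have "\<dots> \<le> N * exp E" using assms by (intro mult_left_mono) auto
  finally show ?thesis .
qed

lemma tail_upper:
  fixes t :: real
  assumes ab: "a \<le> b" "b \<le> m" and m: "1 \<le> m" and t: "0 \<le> t" "t \<le> real (b - a)"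
    and lp: "0 < real (b - a)"
  shows "real (card {w\<in>codes m. real (b - a) + t \<le> real (born m w b - born m w a)})
        \<le> real m ^ (m - 1) * exp (- (t\<^sup>2 / (4 * real (b - a))))"
proof -
  define lam where "lam = real (b - a)"
  define s where "s = t / (2 * lam)"
  have s: "0 \<le> s" using t lp by (simp add: s_def lam_def)
  have "real (card {w\<in>codes m. lam + t \<le> real (born m w b - born m w a)}) * exp (s * (lam + t))
      \<le> (\<Sum>w\<in>codes m. exp (s * real (born m w b - born m w a)))"
    using s by (intro card_exp_markov finite_codes mult_left_mono) auto
  also have "\<dots> \<le> real m ^ (m - 1) * exp (real (m - 1) * (lam / real m) * (exp s - 1))"
    using mgf_bound[OF ab m] by (simp add: lam_def)
  also have "\<dots> \<le> real m ^ (m - 1) * exp (lam * (exp s - 1))"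
  proof -
    have "real (m - 1) * (lam / real m) \<le> lam"
      using m lp by (simp add: lam_def field_simps of_nat_diff)
    moreover have "0 \<le> exp s - 1" using s by simp
    ultimately have "real (m - 1) * (lam / real m) * (exp s - 1) \<le> lam * (exp s - 1)"
      by (rule mult_right_mono)
    thus ?thesis by (intro mult_left_mono) auto
  qed
  finally show ?thesis unfolding lam_def
    by (rule mult_exp_le_shift) (use chernoff_exponent_upper[OF lp t] in \<open>auto simp: s_def lam_def\<close>)
qed

text \<open>Lower tail of an increment of born (one extra factor e from the m-1 instead of m
  trials).\<close>
lemma tail_lower:
  fixes t :: real
  assumes ab: "a \<le> b" "b \<le> m" and m: "1 \<le> m" and t: "0 \<le> t" and lp: "0 < real (b - a)"
  shows "real (card {w\<in>codes m. real (born m w b - born m w a) \<le> real (b - a) - t})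
        \<le> real m ^ (m - 1) * exp (1 - t\<^sup>2 / (4 * real (b - a)))"
proof -
  define lam where "lam = real (b - a)"
  define s where "s = t / (2 * lam)"
  have s: "0 \<le> s" using t lp by (simp add: s_def lam_def)
  have "real (card {w\<in>codes m. real (born m w b - born m w a) \<le> lam - t}) * exp (- s * (lam - t))
      \<le> (\<Sum>w\<in>codes m. exp (- s * real (born m w b - born m w a)))"
    using s by (intro card_exp_markov finite_codes) (auto intro: mult_left_mono)
  also have "\<dots> \<le> real m ^ (m - 1) * exp (real (m - 1) * (lam / real m) * (exp (- s) - 1))"
    using mgf_bound[OF ab m, of "- s"] by (simp add: lam_def)
  also have "\<dots> \<le> real m ^ (m - 1) * exp (lam * (exp (- s) - 1) + 1)"
  proof -
    have "lam \<le> real m" using ab by (simp add: lam_def)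
    hence "lam - 1 \<le> real (m - 1) * (lam / real m)" using m by (simp add: of_nat_diff field_simps)
    moreover have "exp (- s) - 1 \<le> 0" using s by simp
    ultimately have "real (m - 1) * (lam / real m) * (exp (- s) - 1) \<le> (lam - 1) * (exp (- s) - 1)"
      by (rule mult_right_mono_neg)
    also have "\<dots> \<le> lam * (exp (- s) - 1) + 1" by (simp add: algebra_simps)
    finally show ?thesis by (intro mult_left_mono) auto
  qed
  finally show ?thesis unfolding lam_def
    by (rule mult_exp_le_shift) (use chernoff_exponent_lower[OF lp t] in \<open>auto simp: s_def lam_def\<close>)
qed

lemma tail_abs:
  fixes t :: real
  assumes ab: "a \<le> b" "b \<le> m" and m: "1 \<le> m" and t: "0 \<le> t" "t \<le> real (b - a)"
  shows "real (card {w\<in>codes m. t \<le> \<bar>real_of_int (walk m w b - walk m w a)\<bar>})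
        \<le> 4 * exp (- (t\<^sup>2 / (4 * real (b - a)))) * real m ^ (m - 1)"
proof (cases "b = a")
  case True
  have "card {w\<in>codes m. t \<le> \<bar>real_of_int (walk m w b - walk m w a)\<bar>} \<le> card (codes m)"
    using finite_codes by (intro card_mono) auto
  hence "real (card {w\<in>codes m. t \<le> \<bar>real_of_int (walk m w b - walk m w a)\<bar>}) \<le> real (m ^ (m - 1))"
    unfolding card_codes of_nat_le_iff .
  hence "real (card {w\<in>codes m. t \<le> \<bar>real_of_int (walk m w b - walk m w a)\<bar>}) \<le> real m ^ (m - 1)"
    by simp
  moreover have "0 \<le> real m ^ (m - 1)" by simp
  moreover have "4 * exp (- (t\<^sup>2 / (4 * real (b - a)))) * real m ^ (m - 1) = 4 * real m ^ (m - 1)"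
    using True by simp
  ultimately show ?thesis by linarith
next
  case False
  hence lp: "0 < real (b - a)" using ab by simp
  define X where "X w = real (born m w b - born m w a)" for w
  define q where "q = exp (- (t\<^sup>2 / (4 * real (b - a))))"
  have "\<bar>real_of_int (walk m w b - walk m w a)\<bar> = \<bar>X w - real (b - a)\<bar>" for w
    using born_mono[OF ab(1), of m w] ab by (simp add: X_def walk_def of_nat_diff)
  hence "{w\<in>codes m. t \<le> \<bar>real_of_int (walk m w b - walk m w a)\<bar>} \<subseteq>
        {w\<in>codes m. real (b - a) + t \<le> X w} \<union> {w\<in>codes m. X w \<le> real (b - a) - t}"
    by auto
  hence "card {w\<in>codes m. t \<le> \<bar>real_of_int (walk m w b - walk m w a)\<bar>}
      \<le> card ({w\<in>codes m. real (b - a) + t \<le> X w} \<union> {w\<in>codes m. X w \<le> real (b - a) - t})"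
    using finite_codes by (intro card_mono) auto
  also have "\<dots> \<le> card {w\<in>codes m. real (b - a) + t \<le> X w} + card {w\<in>codes m. X w \<le> real (b - a) - t}"
    by (rule card_Un_le)
  also have "real \<dots> \<le> real m ^ (m - 1) * q + real m ^ (m - 1) * (exp 1 * q)"
    using tail_upper[OF ab m t lp] tail_lower[OF ab m t(1) lp]
    by (simp add: X_def q_def exp_diff exp_minus field_simps)
  also have "\<dots> = (1 + exp 1) * (real m ^ (m - 1) * q)" by (simp add: algebra_simps)
  also have "\<dots> \<le> 4 * (real m ^ (m - 1) * q)"
    using exp_le by (intro mult_right_mono) (auto simp: q_def)
  finally show ?thesis by (simp add: q_def mult_ac)
qed

section \<open>Dyadic chaining: a Gaussian tail for the maximum of the walk\<close>

text \<open>On the grid of mesh h 2^(L-l) (level l of a dyadic refinement of mesh h 2^L > m), every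
  increment of f between neighbouring grid points is smaller than t l.\<close>
definition dyadic_good :: "(nat \<Rightarrow> int) \<Rightarrow> nat \<Rightarrow> nat \<Rightarrow> nat \<Rightarrow> (nat \<Rightarrow> real) \<Rightarrow> bool" where
  "dyadic_good f m h L t \<longleftrightarrow> (\<forall>l\<in>{1..L}. \<forall>k. (k + 1) * (h * 2 ^ (L - l)) \<le> m \<longrightarrow>
      \<bar>real_of_int (f ((k + 1) * (h * 2 ^ (L - l))) - f (k * (h * 2 ^ (L - l))))\<bar> < t l)"

lemma chain_level:
  assumes gd: "dyadic_good f m h L t" and f0: "f 0 = 0" and mL: "m < 2 ^ L * h"
    and tnn: "\<And>l. 0 \<le> t l"
  shows "l \<le> L \<Longrightarrow> q * (h * 2 ^ (L - l)) \<le> m \<Longrightarrow>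
    \<bar>real_of_int (f (q * (h * 2 ^ (L - l))))\<bar> \<le> (\<Sum>j\<in>{1..l}. t j)"
proof (induction l arbitrary: q)
  case 0
  hence "q * (h * 2 ^ L) \<le> m" by simp
  moreover have "m < h * 2 ^ L" using mL by (simp add: mult.commute)
  ultimately have "q * (h * 2 ^ L) < h * 2 ^ L" by (rule le_less_trans)
  hence "q = 0" using mult_less_cancel2[of q "h * 2 ^ L" 1] by simp
  thus ?case using f0 by simp
next
  case (Suc l)
  define G where "G = h * 2 ^ (L - Suc l)"
  have "L - l = Suc (L - Suc l)" using Suc.prems by simp
  hence GG: "h * 2 ^ (L - l) = 2 * G" by (simp add: G_def)
  have sumS: "(\<Sum>j\<in>{1..Suc l}. t j) = (\<Sum>j\<in>{1..l}. t j) + t (Suc l)"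
    by (simp add: sum.cl_ivl_Suc)
  have qG: "q * G \<le> m" using Suc.prems by (simp add: G_def)
  obtain q' where "q = 2 * q' \<or> q = 2 * q' + 1" by (metis oddE evenE)
  hence ih: "\<bar>real_of_int (f ((2 * q') * G))\<bar> \<le> (\<Sum>j\<in>{1..l}. t j)"
    using Suc.IH[of q'] Suc.prems qG GG by (auto simp: mult_ac)
  show ?case
  proof (cases "q = 2 * q'")
    case True
    thus ?thesis using ih sumS tnn[of "Suc l"] by (simp add: G_def)
  next
    case False
    hence q: "q = 2 * q' + 1" using \<open>q = 2 * q' \<or> q = 2 * q' + 1\<close> by simp
    have "Suc l \<in> {1..L}" using Suc.prems by simp
    hence "\<bar>real_of_int (f ((2 * q' + 1) * G) - f ((2 * q') * G))\<bar> < t (Suc l)"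
      using gd qG q unfolding dyadic_good_def G_def by blast
    hence "\<bar>real_of_int (f (q * G))\<bar> \<le> (\<Sum>j\<in>{1..l}. t j) + t (Suc l)"
      using ih unfolding q of_int_diff by linarith
    thus ?thesis using sumS by (simp add: G_def)
  qed
qed

lemma walk_lower_step: "i \<le> j \<Longrightarrow> walk m w i - int (j - i) \<le> walk m w j"
  using born_mono[of i j m w] by (simp add: walk_def of_nat_diff)

text \<open>Only m - 1 - i vertices can still be discovered after time i.\<close>
lemma walk_upper: "walk m w i \<le> int (m - 1) - int i"
  using born_le[of m w i] by (simp add: walk_def)

text \<open>A walk that is good at all dyadic levels is bounded by the sum of the thresholds plus the
  finest mesh h; between grid points we use the one-sided step bounds above.\<close>
lemma chain_all:
  assumes gd: "dyadic_good (walk m w) m h L t" and mL: "m < 2 ^ L * h" and tnn: "\<And>l. 0 \<le> t l"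
    and h: "1 \<le> h" and m: "1 \<le> m" and i: "i \<le> m"
  shows "\<bar>real_of_int (walk m w i)\<bar> \<le> (\<Sum>j\<in>{1..L}. t j) + real h"
proof -
  define S where "S = (\<Sum>j\<in>{1..L}. t j)"
  have S0: "0 \<le> S" unfolding S_def using tnn by (intro sum_nonneg) auto
  have grid: "\<bar>real_of_int (walk m w (q * h))\<bar> \<le> S" if "q * h \<le> m" for q
    using chain_level[OF gd walk_0 mL tnn, of L q] that by (simp add: S_def)
  define g where "g = (i div h) * h"
  have "i div h * h + i mod h = i" "i mod h < h" using h by simp_all
  hence gi: "g \<le> i" "i < g + h" unfolding g_def by linarith+
  have lo: "walk m w g - int (i - g) \<le> walk m w i" by (rule walk_lower_step[OF gi(1)])
  have up: "real_of_int (walk m w i) \<le> S + real h"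
  proof (cases "g + h \<le> m")
    case True
    hence "\<bar>real_of_int (walk m w (g + h))\<bar> \<le> S"
      using grid[of "i div h + 1"] by (simp add: g_def algebra_simps)
    moreover have "walk m w i - int (g + h - i) \<le> walk m w (g + h)"
      using gi by (intro walk_lower_step) simp
    hence "walk m w i \<le> walk m w (g + h) + int h" using gi by linarith
    hence "real_of_int (walk m w i) \<le> real_of_int (walk m w (g + h)) + real h"
      by (metis of_int_le_iff of_int_add of_int_of_nat_eq)
    ultimately show ?thesis by linarith
  next
    case False
    hence "int (m - 1) - int i \<le> int h" using gi m by linarith
    hence "walk m w i \<le> int h" using walk_upper[of m w i] by linarith
    thus ?thesis using S0 by linarith
  qed
  have "g \<le> m" using gi i by simp
  hence "\<bar>real_of_int (walk m w g)\<bar> \<le> S" using grid[of "i div h"] unfolding g_def by blast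
  moreover have "walk m w g - int h \<le> walk m w i" using lo gi by linarith
  ultimately have "- S - real h \<le> real_of_int (walk m w i)" by linarith
  with up show ?thesis unfolding S_def by linarith
qed

lemma block_tail:
  assumes m: "1 \<le> m" and km: "(k + 1) * g \<le> m" and t: "0 \<le> \<tau>" "\<tau> \<le> real g"
  shows "real (card {w\<in>codes m. \<tau> \<le> \<bar>real_of_int (walk m w ((k + 1) * g) - walk m w (k * g))\<bar>})
    \<le> 4 * exp (- (\<tau>\<^sup>2 / (4 * real g))) * real m ^ (m - 1)"
proof -
  have "real (card {w\<in>codes m. \<tau> \<le> \<bar>real_of_int (walk m w ((k + 1) * g) - walk m w (k * g))\<bar>})
    \<le> 4 * exp (- (\<tau>\<^sup>2 / (4 * real ((k + 1) * g - k * g)))) * real m ^ (m - 1)"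
    by (rule tail_abs) (use km m t in simp_all)
  thus ?thesis by simp
qed

lemma bad_count:
  assumes m: "1 \<le> m" and h: "1 \<le> h" and tnn: "\<And>l. 0 \<le> t l"
    and tg: "\<And>l. l \<in> {1..L} \<Longrightarrow> t l \<le> real (h * 2 ^ (L - l))"
  shows "real (card {w\<in>codes m. \<not> dyadic_good (walk m w) m h L t}) \<le>
     (\<Sum>l\<in>{1..L}. real (m div (h * 2 ^ (L - l))) *
         (4 * exp (- ((t l)\<^sup>2 / (4 * real (h * 2 ^ (L - l))))) * real m ^ (m - 1)))"
proof -
  define g where "g l = h * 2 ^ (L - l)" for l
  have gpos: "0 < g l" for l using h by (simp add: g_def)
  have blocks: "(k + 1) * g l \<le> m \<longleftrightarrow> k < m div g l" for k l
    using less_eq_div_iff_mult_less_eq[OF gpos[of l], of "k + 1" m] by (metis Suc_eq_plus1 Suc_le_eq)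
  define B where "B l k = {w\<in>codes m. t l \<le> \<bar>real_of_int (walk m w ((k + 1) * g l) - walk m w (k * g l))\<bar>}" for l k
  have "{w\<in>codes m. \<not> dyadic_good (walk m w) m h L t} \<subseteq> (\<Union>l\<in>{1..L}. \<Union>k\<in>{..<m div g l}. B l k)"
  proof
    fix w assume "w \<in> {w\<in>codes m. \<not> dyadic_good (walk m w) m h L t}"
    then obtain l k where w: "w \<in> codes m" "l \<in> {1..L}" "(k + 1) * g l \<le> m"
       "\<not> \<bar>real_of_int (walk m w ((k + 1) * g l) - walk m w (k * g l))\<bar> < t l"
      unfolding dyadic_good_def g_def by auto
    hence "k \<in> {..<m div g l}" "w \<in> B l k" using blocks unfolding B_def by auto
    thus "w \<in> (\<Union>l\<in>{1..L}. \<Union>k\<in>{..<m div g l}. B l k)" using w(2) by blast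
  qed
  hence "card {w\<in>codes m. \<not> dyadic_good (walk m w) m h L t} \<le> card (\<Union>l\<in>{1..L}. \<Union>k\<in>{..<m div g l}. B l k)"
    by (rule card_mono[rotated]) (simp add: B_def finite_codes)
  also have "\<dots> \<le> (\<Sum>l\<in>{1..L}. card (\<Union>k\<in>{..<m div g l}. B l k))"
    by (rule card_UN_le) simp
  also have "\<dots> \<le> (\<Sum>l\<in>{1..L}. \<Sum>k\<in>{..<m div g l}. card (B l k))"
    by (intro sum_mono card_UN_le) simp
  finally have "real (card {w\<in>codes m. \<not> dyadic_good (walk m w) m h L t})
      \<le> (\<Sum>l\<in>{1..L}. \<Sum>k\<in>{..<m div g l}. real (card (B l k)))"
    by (simp only: of_nat_sum[symmetric] of_nat_le_iff)
  also have "\<dots> \<le> (\<Sum>l\<in>{1..L}. \<Sum>k\<in>{..<m div g l}. 4 * exp (- ((t l)\<^sup>2 / (4 * real (g l)))) * real m ^ (m - 1))"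
  proof (intro sum_mono)
    fix l k assume l: "l \<in> {1..L}" and k: "k \<in> {..<m div g l}"
    show "real (card (B l k)) \<le> 4 * exp (- ((t l)\<^sup>2 / (4 * real (g l)))) * real m ^ (m - 1)"
      unfolding B_def using blocks[of k l] k tnn[of l] tg[OF l]
      by (intro block_tail[OF m]) (simp_all add: g_def)
  qed
  also have "\<dots> = (\<Sum>l\<in>{1..L}. real (m div g l) * (4 * exp (- ((t l)\<^sup>2 / (4 * real (g l)))) * real m ^ (m - 1)))"
    by simp
  finally show ?thesis unfolding g_def .
qed

lemma geo_sum_le:
  fixes r :: real
  assumes "0 \<le> r" "r < 1"
  shows "(\<Sum>l\<in>{1..L}. r ^ (l - 1)) \<le> 1 / (1 - r)"
proof -
  have "(\<Sum>l\<in>{1..L}. r ^ (l - 1)) = (\<Sum>k<L. r ^ k)"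
    by (simp add: sum.atLeast1_atMost_eq)
  also have "\<dots> = (1 - r ^ L) / (1 - r)" using assms by (simp add: sum_gp_strict)
  also have "\<dots> \<le> 1 / (1 - r)" using assms by (intro divide_right_mono) auto
  finally show ?thesis .
qed

lemma exp_neg2: "exp (-2::real) \<le> 1/4"
proof -
  have "(2::real) \<le> exp 1" using exp_ge_add_one_self[of "1::real"] by simp
  hence "(2::real) ^ 2 \<le> exp 1 ^ 2" by (intro power_mono) auto
  hence "4 \<le> exp (2::real)" by (simp add: exp_of_nat_mult[symmetric])
  thus ?thesis by (simp add: exp_minus field_simps)
qed

text \<open>With thresholds t_l = y/16 (3/4)^(l-1) at a level of mesh g with g 2^(l-1) \<le> M, the
  Gaussian exponent beats the target exponent y^2/(1024 M) by at least 2(l-1).\<close>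
lemma level_exponent:
  fixes y g M :: real and j :: nat
  assumes g: "0 < g" and gj: "g * 2 ^ j \<le> M" and A: "16 \<le> y\<^sup>2 / (1024 * M)"
  shows "y\<^sup>2 / (1024 * M) + 2 * real j \<le> (y / 16 * (3/4) ^ j)\<^sup>2 / (4 * g)"
proof -
  define A' where "A' = y\<^sup>2 / (1024 * M)"
  have "0 < g * 2 ^ j" using g by simp
  hence M: "0 < M" using gj by linarith
  have "((3/4::real) ^ j)\<^sup>2 = (9/16) ^ j"
    by (simp add: power_mult_distrib[symmetric] power2_eq_square power_mult[symmetric])
  hence t2: "(y / 16 * (3/4) ^ j)\<^sup>2 = y\<^sup>2 * (9/16) ^ j / 256"
    by (simp add: power_mult_distrib power2_eq_square)
  have "A' * (9/8) ^ j = y\<^sup>2 * (9/16) ^ j * 2 ^ j / (1024 * M)"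
    by (simp add: A'_def power_mult_distrib[symmetric])
  also have "\<dots> \<le> y\<^sup>2 * (9/16) ^ j * 2 ^ j / (1024 * (g * 2 ^ j))"
    using gj g M by (intro divide_left_mono mult_pos_pos) auto
  also have "\<dots> = (y / 16 * (3/4) ^ j)\<^sup>2 / (4 * g)"
    unfolding t2 by (simp add: field_simps)
  finally have e1: "A' * (9/8) ^ j \<le> (y / 16 * (3/4) ^ j)\<^sup>2 / (4 * g)" .
  have "1 + real j * (1/8) \<le> (1 + 1/8::real) ^ j" by (rule Bernoulli_inequality) simp
  hence "A' * (1 + real j / 8) \<le> A' * (9/8) ^ j" using A by (intro mult_left_mono) (auto simp: A'_def)
  moreover have "16 * real j \<le> A' * real j" using A by (intro mult_right_mono) (auto simp: A'_def)
  ultimately show ?thesis using e1 unfolding A'_def[symmetric] by (simp add: algebra_simps)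
qed

lemma term_bound:
  fixes y :: real
  assumes h: "1 \<le> h" and l: "l \<in> {1..L}" and mL: "m < 2 ^ L * h"
    and mL': "2 ^ (L - 1) * h \<le> m" and A: "16 \<le> y\<^sup>2 / (1024 * real m)"
  shows "real (m div (h * 2 ^ (L - l))) * (4 * exp (- ((y / 16 * (3/4) ^ (l - 1))\<^sup>2 / (4 * real (h * 2 ^ (L - l))))))
     \<le> 8 * exp (- (y\<^sup>2 / (1024 * real m))) * (1/2) ^ (l - 1)"
proof -
  define g where "g = h * 2 ^ (L - l)"
  define j where "j = l - 1"
  define A' where "A' = y\<^sup>2 / (1024 * real m)"
  have gpos: "0 < g" using h by (simp add: g_def)
  have lj: "l = Suc j" using l by (simp add: j_def)
  have "2 ^ L = 2 ^ l * (2::nat) ^ (L - l)" "2 ^ (L - 1) = 2 ^ j * (2::nat) ^ (L - l)"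
    using l by (simp_all add: j_def power_add[symmetric])
  hence ml: "m < 2 ^ l * g" and gjn: "g * 2 ^ j \<le> m" using mL mL' by (simp_all add: g_def mult_ac)
  have "m div g < 2 ^ l" using ml div_less_iff_less_mult[OF gpos] by simp
  hence a: "real (m div g) \<le> 2 ^ l" by (metis less_imp_le of_nat_le_iff of_nat_numeral of_nat_power)
  have gj: "real g * 2 ^ j \<le> real m"
    using gjn by (metis of_nat_le_iff of_nat_mult of_nat_numeral of_nat_power)
  have "exp (- ((y / 16 * (3/4) ^ j)\<^sup>2 / (4 * real g))) \<le> exp (- A' + real j * (-2))"
    using level_exponent[OF _ gj A] gpos by (simp add: A'_def)
  also have "\<dots> = exp (- A') * exp (-2) ^ j" by (simp only: exp_add exp_of_nat_mult)
  also have "\<dots> \<le> exp (- A') * (1/4) ^ j" by (intro mult_left_mono power_mono exp_neg2) auto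
  finally have b: "exp (- ((y / 16 * (3/4) ^ j)\<^sup>2 / (4 * real g))) \<le> exp (- A') * (1/4) ^ j" .
  have "real (m div g) * (4 * exp (- ((y / 16 * (3/4) ^ j)\<^sup>2 / (4 * real g))))
      \<le> 2 ^ l * (4 * (exp (- A') * (1/4) ^ j))"
    using a b by (intro mult_mono) auto
  also have "\<dots> = 8 * exp (- A') * (2 ^ j * (1/4) ^ j)" by (simp add: lj)
  also have "2 ^ j * (1/4::real) ^ j = (1/2) ^ j" by (simp add: power_mult_distrib[symmetric])
  finally show ?thesis by (simp add: g_def A'_def j_def)
qed

lemma sum_thresholds:
  fixes y :: real
  assumes "0 \<le> y"
  shows "(\<Sum>l\<in>{1..L}. y / 16 * (3/4) ^ (l - 1)) \<le> y / 4"
proof -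
  have "(\<Sum>l\<in>{1..L}. y / 16 * (3/4) ^ (l - 1)) = y / 16 * (\<Sum>l\<in>{1..L}. (3/4) ^ (l - 1))"
    by (simp add: sum_distrib_left)
  also have "\<dots> \<le> y / 16 * (1 / (1 - 3/4))"
    using assms by (intro mult_left_mono geo_sum_le) auto
  finally show ?thesis by simp
qed

text \<open>Each threshold is at most y/16, hence below every mesh size.\<close>
lemma threshold_le_mesh:
  fixes y :: real
  assumes "0 < y" "y / 16 \<le> real h"
  shows "y / 16 * (3/4) ^ (l - 1) \<le> real (h * 2 ^ (L - l))"
proof -
  have "(3/4::real) ^ (l - 1) \<le> 1" by (rule power_le_one) auto
  hence "y / 16 * (3/4) ^ (l - 1) \<le> y / 16" using assms by (simp add: mult_left_le)
  moreover have "h * 1 \<le> h * 2 ^ (L - l)" by (intro mult_le_mono2) simp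
  hence "real h \<le> real (h * 2 ^ (L - l))" by linarith
  ultimately show ?thesis using assms by linarith
qed

text \<open>If all dyadic increments are below the thresholds, the walk stays below y in absolute
  value (the thresholds sum to y/4 and the finest mesh is at most y/8).\<close>
lemma large_walk_not_good:
  fixes y :: real
  assumes m: "1 \<le> m" and h: "1 \<le> h" "real h \<le> y / 8" and y: "0 < y"
    and mL: "m < 2 ^ L * h" and tnn: "\<And>l. 0 \<le> t l" and sumt: "(\<Sum>j\<in>{1..L}. t j) \<le> y / 4"
  shows "{w\<in>codes m. \<exists>i\<le>m. y \<le> \<bar>real_of_int (walk m w i)\<bar>}
      \<subseteq> {w\<in>codes m. \<not> dyadic_good (walk m w) m h L t}"
proof (intro subsetI CollectI conjI)
  fix w assume "w \<in> {w\<in>codes m. \<exists>i\<le>m. y \<le> \<bar>real_of_int (walk m w i)\<bar>}"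
  then obtain i where w: "w \<in> codes m" "i \<le> m" "y \<le> \<bar>real_of_int (walk m w i)\<bar>" by auto
  show "w \<in> codes m" by (rule w(1))
  show "\<not> dyadic_good (walk m w) m h L t"
  proof
    assume "dyadic_good (walk m w) m h L t"
    hence "\<bar>real_of_int (walk m w i)\<bar> \<le> (\<Sum>j\<in>{1..L}. t j) + real h"
      by (rule chain_all[OF _ mL tnn h(1) m w(2)])
    thus False using w(3) sumt h y by linarith
  qed
qed

text \<open>Maximal inequality for a fixed dyadic scheme: finest mesh h \<approx> y/8 and L levels, the coarsest
  mesh h 2^L just exceeding m.\<close>
lemma max_ineq_dyadic:
  fixes y :: real
  assumes m: "1 \<le> m" and h: "1 \<le> h" "y / 16 \<le> real h" "real h \<le> y / 8" and y: "0 < y"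
    and mL: "m < 2 ^ L * h" and mL': "1 \<le> L \<Longrightarrow> 2 ^ (L - 1) * h \<le> m"
    and A: "16 \<le> y\<^sup>2 / (1024 * real m)"
  shows "real (card {w\<in>codes m. \<exists>i\<le>m. y \<le> \<bar>real_of_int (walk m w i)\<bar>})
    \<le> 16 * exp (- (y\<^sup>2 / (1024 * real m))) * real m ^ (m - 1)"
proof -
  define t where "t l = y / 16 * (3/4) ^ (l - 1)" for l :: nat
  define N where "N = real m ^ (m - 1)"
  define E where "E = exp (- (y\<^sup>2 / (1024 * real m)))"
  have tnn: "0 \<le> t l" for l using y by (simp add: t_def)
  have tg: "t l \<le> real (h * 2 ^ (L - l))" for l
    unfolding t_def using threshold_le_mesh y h(2) by simp
  have sumt: "(\<Sum>j\<in>{1..L}. t j) \<le> y / 4" using sum_thresholds[of y L] y by (simp add: t_def)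
  have "real (card {w\<in>codes m. \<exists>i\<le>m. y \<le> \<bar>real_of_int (walk m w i)\<bar>})
      \<le> real (card {w\<in>codes m. \<not> dyadic_good (walk m w) m h L t})"
    using large_walk_not_good[OF m h(1) h(3) y mL tnn sumt] finite_codes by (simp add: card_mono)
  also have "\<dots> \<le> (\<Sum>l\<in>{1..L}. real (m div (h * 2 ^ (L - l))) *
         (4 * exp (- ((t l)\<^sup>2 / (4 * real (h * 2 ^ (L - l))))) * N))"
    unfolding N_def by (rule bad_count[OF m h(1) tnn tg])
  also have "\<dots> \<le> (\<Sum>l\<in>{1..L}. 8 * E * N * (1/2) ^ (l - 1))"
  proof (rule sum_mono)
    fix l assume l: "l \<in> {1..L}"
    have "real (m div (h * 2 ^ (L - l))) * (4 * exp (- ((t l)\<^sup>2 / (4 * real (h * 2 ^ (L - l))))))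
      \<le> 8 * E * (1/2) ^ (l - 1)"
      unfolding t_def E_def using l mL' by (intro term_bound[OF h(1) l mL _ A]) auto
    hence "real (m div (h * 2 ^ (L - l))) * (4 * exp (- ((t l)\<^sup>2 / (4 * real (h * 2 ^ (L - l)))))) * N
      \<le> 8 * E * (1/2) ^ (l - 1) * N"
      by (intro mult_right_mono) (auto simp: N_def)
    thus "real (m div (h * 2 ^ (L - l))) * (4 * exp (- ((t l)\<^sup>2 / (4 * real (h * 2 ^ (L - l))))) * N)
      \<le> 8 * E * N * (1/2) ^ (l - 1)"
      by (simp add: mult_ac)
  qed
  also have "\<dots> = 8 * E * N * (\<Sum>l\<in>{1..L}. (1/2) ^ (l - 1))"
    by (rule sum_distrib_left[symmetric])
  also have "\<dots> \<le> 8 * E * N * (1 / (1 - 1/2))"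
    by (intro mult_left_mono geo_sum_le) (auto simp: E_def N_def)
  finally show ?thesis by (simp add: E_def N_def)
qed

lemma max_ineq_big:
  fixes y :: real
  assumes m: "1 \<le> m" and y0: "0 \<le> y" and A: "16 \<le> y\<^sup>2 / (1024 * real m)"
  shows "real (card {w\<in>codes m. \<exists>i\<le>m. y \<le> \<bar>real_of_int (walk m w i)\<bar>})
    \<le> 16 * exp (- (y\<^sup>2 / (1024 * real m))) * real m ^ (m - 1)"
proof -
  have y: "0 < y" using y0 A by (cases "y = 0") auto
  have "16 * 1024 \<le> y\<^sup>2" using A m by (simp add: field_simps)
  have y128: "128 \<le> y"
  proof (rule ccontr)
    assume "\<not> 128 \<le> y"
    hence "y * y < 128 * 128" using y by (intro mult_strict_mono') auto
    thus False using \<open>16 * 1024 \<le> y\<^sup>2\<close> by (simp add: power2_eq_square)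
  qed
  define h where "h = nat \<lfloor>y / 8\<rfloor>"
  have hfl: "real h = real_of_int \<lfloor>y / 8\<rfloor>" using y by (simp add: h_def)
  have h1: "real h \<le> y / 8" using of_int_floor_le[of "y / 8"] hfl by linarith
  have h2: "y / 16 \<le> real h"
    using real_of_int_floor_gt_diff_one[of "y / 8"] hfl y128 by linarith
  have h0: "1 \<le> h" using h2 y128 by linarith
  define L where "L = (LEAST L. m < 2 ^ L * h)"
  have "m < 2 ^ m * h" using h0 less_exp[of m] by (metis less_le_trans mult.right_neutral mult_le_mono2)
  hence mL: "m < 2 ^ L * h" unfolding L_def by (rule LeastI)
  have mL': "2 ^ (L - 1) * h \<le> m" if "1 \<le> L"
  proof -
    have "L - 1 < L" using that by simp
    hence "\<not> m < 2 ^ (L - 1) * h" unfolding L_def by (rule not_less_Least)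
    thus ?thesis by simp
  qed
  show ?thesis by (rule max_ineq_dyadic[OF m h0 h2 h1 y mL mL' A])
qed

text \<open>Gaussian maximal inequality for all y \<ge> 0 (small y are absorbed into the constant).\<close>
lemma max_ineq:
  fixes y :: real
  assumes m: "1 \<le> m" and y: "0 \<le> y"
  shows "real (card {w\<in>codes m. \<exists>i\<le>m. y \<le> \<bar>real_of_int (walk m w i)\<bar>})
    \<le> 16 * exp 16 * exp (- (y\<^sup>2 / (1024 * real m))) * real m ^ (m - 1)"
proof (cases "16 \<le> y\<^sup>2 / (1024 * real m)")
  case True
  have "real (card {w\<in>codes m. \<exists>i\<le>m. y \<le> \<bar>real_of_int (walk m w i)\<bar>})
    \<le> 16 * exp (- (y\<^sup>2 / (1024 * real m))) * real m ^ (m - 1)"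
    by (rule max_ineq_big[OF m y True])
  also have "\<dots> \<le> 16 * exp 16 * exp (- (y\<^sup>2 / (1024 * real m))) * real m ^ (m - 1)"
  proof -
    have "1 \<le> exp (16::real)" by simp
    thus ?thesis by (intro mult_right_mono) auto
  qed
  finally show ?thesis .
next
  case False
  have "card {w\<in>codes m. \<exists>i\<le>m. y \<le> \<bar>real_of_int (walk m w i)\<bar>} \<le> card (codes m)"
    using finite_codes by (intro card_mono) auto
  hence "real (card {w\<in>codes m. \<exists>i\<le>m. y \<le> \<bar>real_of_int (walk m w i)\<bar>}) \<le> 1 * real m ^ (m - 1)"
    by (simp add: card_codes flip: of_nat_power)
  also have "\<dots> \<le> 16 * exp 16 * exp (- (y\<^sup>2 / (1024 * real m))) * real m ^ (m - 1)"
  proof (intro mult_right_mono)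
    have "1 \<le> exp (16 - y\<^sup>2 / (1024 * real m))" using False by simp
    also have "\<dots> = exp 16 * exp (- (y\<^sup>2 / (1024 * real m)))" by (simp add: exp_diff exp_minus field_simps)
    finally show "1 \<le> 16 * exp 16 * exp (- (y\<^sup>2 / (1024 * real m)))" by simp
  qed auto
  finally show ?thesis .
qed

section \<open>The search driven by a code\<close>

text \<open>The search on a code w mimics the ordered DFS: at step j the head of the queue (the j-th
  explored vertex) is removed and the vertices born at time j, i.e. with w u = j, are pushed in
  increasing order.  The state is (queue, explored set), as in odfs_state.\<close>
primrec search :: "nat \<Rightarrow> (nat \<Rightarrow> nat) \<Rightarrow> nat \<Rightarrow> nat list \<times> nat set" where
  "search m w 0 = ([1], {})"
| "search m w (Suc j) = (sorted_list_of_set {u\<in>{2..m}. w u = j} @ tl (fst (search m w j)),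
                      insert (hd (fst (search m w j))) (snd (search m w j)))"

definition explored :: "nat \<Rightarrow> (nat \<Rightarrow> nat) \<Rightarrow> nat \<Rightarrow> nat" where
  "explored m w j = hd (fst (search m w j))"

definition born_before :: "nat \<Rightarrow> (nat \<Rightarrow> nat) \<Rightarrow> nat \<Rightarrow> nat set" where
  "born_before m w j = {u\<in>{2..m}. w u < j}"

definition born_at :: "nat \<Rightarrow> (nat \<Rightarrow> nat) \<Rightarrow> nat \<Rightarrow> nat set" where
  "born_at m w j = {u\<in>{2..m}. w u = j}"

lemma born_before_Suc: "born_before m w (Suc j) = born_before m w j \<union> born_at m w j"
  by (auto simp: born_before_def born_at_def)

lemma born_Suc: "born m w (Suc j) = born m w j + card (born_at m w j)"
proof -
  have "born_before m w j \<inter> born_at m w j = {}" by (auto simp: born_before_def born_at_def)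
  thus ?thesis unfolding born_def born_before_Suc[unfolded born_before_def]
    by (simp add: card_Un_disjoint born_at_def born_before_def)
qed

definition search_inv :: "nat \<Rightarrow> (nat \<Rightarrow> nat) \<Rightarrow> nat \<Rightarrow> bool" where
  "search_inv m w j \<longleftrightarrow>
     set (fst (search m w j)) \<union> snd (search m w j) = insert 1 (born_before m w j)
     \<and> int (length (fst (search m w j))) = 1 + walk m w j
     \<and> snd (search m w j) = explored m w ` {..<j}"

lemma search_inv_0: "search_inv m w 0"
  by (simp add: search_inv_def born_before_def walk_def born_def)

lemma search_inv_Suc:
  assumes inv: "search_inv m w j" and ne: "fst (search m w j) \<noteq> []"
  shows "search_inv m w (Suc j)"
proof -
  define Q where "Q = fst (search m w j)"
  define A where "A = snd (search m w j)"
  define N where "N = sorted_list_of_set (born_at m w j)"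
  have Qeq: "Q = hd Q # tl Q" using ne by (simp add: Q_def)
  have un: "set Q \<union> A = insert 1 (born_before m w j)"
    and len: "int (length Q) = 1 + walk m w j" and Av: "A = explored m w ` {..<j}"
    using inv unfolding search_inv_def Q_def[symmetric] A_def[symmetric] by blast+
  have st: "search m w (Suc j) = (N @ tl Q, insert (hd Q) A)"
    by (simp add: Q_def A_def N_def born_at_def)
  have "set Q = insert (hd Q) (set (tl Q))" using Qeq by (metis list.simps(15))
  hence "set (N @ tl Q) \<union> insert (hd Q) A = insert 1 (born_before m w (Suc j))"
    using un by (auto simp: born_before_Suc N_def born_at_def)
  moreover have "int (length (N @ tl Q)) = 1 + walk m w (Suc j)"
    using len Qeq born_Suc[of m w j] by (cases Q) (auto simp: walk_def N_def)
  moreover have "insert (hd Q) A = explored m w ` {..<Suc j}"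
    using Av by (auto simp: explored_def Q_def lessThan_Suc)
  ultimately show ?thesis unfolding search_inv_def st by simp
qed

lemma search_inv_valid:
  assumes v: "valid m w" and j: "j \<le> m"
  shows "search_inv m w j \<and> (j < m \<longrightarrow> fst (search m w j) \<noteq> [])"
  using j
proof (induction j)
  case 0
  thus ?case using search_inv_0 by simp
next
  case (Suc j)
  hence "search_inv m w (Suc j)" using search_inv_Suc by simp
  moreover have "fst (search m w (Suc j)) \<noteq> []" if "Suc j < m"
  proof -
    have "walk m w (Suc j) \<ge> 0" using v that unfolding valid_def by blast
    moreover have "int (length (fst (search m w (Suc j)))) = 1 + walk m w (Suc j)"
      using \<open>search_inv m w (Suc j)\<close> unfolding search_inv_def by blast
    ultimately have "0 < length (fst (search m w (Suc j)))" by linarith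
    thus ?thesis by (rule iffD1[OF length_greater_0_conv])
  qed
  ultimately show ?case by simp
qed

definition tree_of :: "nat \<Rightarrow> (nat \<Rightarrow> nat) \<Rightarrow> nat set set" where
  "tree_of m w = (\<lambda>u. {u, explored m w (w u)}) ` {2..m}"

lemma adj_sym: "adj E a b \<Longrightarrow> adj E b a"
  by (auto simp: adj_def insert_commute)

lemma adj_mono: "G \<subseteq> E \<Longrightarrow> adj G a b \<Longrightarrow> adj E a b"
  by (auto simp: adj_def)

locale valid_code =
  fixes m :: nat and w :: "nat \<Rightarrow> nat"
  assumes m1: "1 \<le> m" and ww: "w \<in> codes m" and wv: "valid m w"
begin

abbreviation "Q j \<equiv> fst (search m w j)"
abbreviation "A j \<equiv> snd (search m w j)"
abbreviation "v j \<equiv> explored m w j"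

lemma search_invariant: "j \<le> m \<Longrightarrow> search_inv m w j"
  using search_inv_valid[OF wv] by blast

lemma queue_nonempty: "j < m \<Longrightarrow> Q j \<noteq> []"
  using search_inv_valid[OF wv, of j] by simp

lemma queue_explored_eq: "j \<le> m \<Longrightarrow> set (Q j) \<union> A j = insert 1 (born_before m w j)"
  using search_invariant unfolding search_inv_def by blast

lemma explored_set_eq: "j \<le> m \<Longrightarrow> A j = v ` {..<j}"
  using search_invariant unfolding search_inv_def by blast

lemma length_queue: "j \<le> m \<Longrightarrow> int (length (Q j)) = 1 + walk m w j"
  using search_invariant unfolding search_inv_def by blast

text \<open>At time m the walk is at -1: the queue is empty and every vertex has been explored,
  so exploring is a bijection v between times [0,m) and vertices [1,m] with inverse pos.\<close>
lemma born_before_m: "born_before m w m = {2..m}"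
  using codes_lt[OF ww] by (auto simp: born_before_def)

lemma queue_m: "Q m = []"
proof -
  have "int (length (Q m)) = 1 + walk m w m" by (rule length_queue) simp
  thus ?thesis using walk_m[OF ww m1] by simp
qed

lemma explored_m: "A m = {1..m}"
proof -
  have "set (Q m) \<union> A m = insert 1 (born_before m w m)" by (rule queue_explored_eq) simp
  thus ?thesis using queue_m born_before_m m1 by auto
qed

lemma explored_image: "v ` {..<m} = {1..m}"
  using explored_set_eq[of m] explored_m by simp

lemma explored_inj: "inj_on v {..<m}"
proof -
  have "card (v ` {..<m}) = card {..<m}" using explored_image by simp
  thus ?thesis by (simp add: inj_on_iff_eq_card)
qed

definition pos :: "nat \<Rightarrow> nat" where "pos u = the_inv_into {..<m} v u"

lemma pos_lt: "u \<in> {1..m} \<Longrightarrow> pos u < m"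
  unfolding pos_def using the_inv_into_into[OF explored_inj, of u "{..<m}"] explored_image by auto

lemma v_pos: "u \<in> {1..m} \<Longrightarrow> v (pos u) = u"
  unfolding pos_def using f_the_inv_into_f[OF explored_inj, of u] explored_image by auto

lemma pos_v: "j < m \<Longrightarrow> pos (v j) = j"
  unfolding pos_def using the_inv_into_f_f[OF explored_inj, of j] by auto

lemma v_range: "j < m \<Longrightarrow> v j \<in> {1..m}"
  using explored_image by auto

lemma v_eq_iff: "i < m \<Longrightarrow> j < m \<Longrightarrow> v i = v j \<longleftrightarrow> i = j"
  using explored_inj by (auto simp: inj_on_def)

lemma explored_in_queue: "j < m \<Longrightarrow> v j \<in> set (Q j)"
  using queue_nonempty[of j] by (simp add: explored_def)

text \<open>A vertex is explored after its parent: it is only born at time w u.\<close>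
lemma parent_before: "u \<in> {2..m} \<Longrightarrow> w u < pos u"
proof -
  assume u: "u \<in> {2..m}"
  hence u1: "u \<in> {1..m}" by auto
  have "pos u < m" using pos_lt[OF u1] .
  hence "v (pos u) \<in> set (Q (pos u))" by (rule explored_in_queue)
  hence "u \<in> insert 1 (born_before m w (pos u))" using queue_explored_eq[of "pos u"] v_pos[OF u1] \<open>pos u < m\<close> by auto
  thus ?thesis using u by (auto simp: born_before_def)
qed

lemma explored_before: "i < j \<Longrightarrow> j \<le> m \<Longrightarrow> v i \<in> A j"
  using explored_set_eq by auto

lemma born_at_unseen: "x \<in> born_at m w j \<Longrightarrow> j \<le> m \<Longrightarrow> x \<notin> set (Q j) \<and> x \<notin> A j"
proof -
  assume x: "x \<in> born_at m w j" and j: "j \<le> m"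
  have "x \<notin> insert 1 (born_before m w j)" using x by (auto simp: born_before_def born_at_def)
  thus ?thesis using queue_explored_eq[OF j] by blast
qed

lemma not_own_parent: "u \<in> {2..m} \<Longrightarrow> u \<noteq> v (w u)"
proof
  assume u: "u \<in> {2..m}" and eq: "u = v (w u)"
  have "w u < m" using codes_lt[OF ww u] .
  from pos_v[OF this] have "pos u = w u" by (simp only: eq[symmetric])
  thus False using parent_before[OF u] by simp
qed

lemma parent_range: "u \<in> {2..m} \<Longrightarrow> v (w u) \<in> {1..m}"
  using codes_lt[OF ww] v_range by auto

lemma adj_tree_of: "adj (tree_of m w) a b \<longleftrightarrow> a \<noteq> b \<and> (\<exists>u\<in>{2..m}. {a, b} = {u, v (w u)})"
  unfolding adj_def tree_of_def by auto

lemma adj_tree_of_cases: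
  assumes "adj (tree_of m w) a b"
  shows "(a \<in> {2..m} \<and> b = v (w a)) \<or> (b \<in> {2..m} \<and> a = v (w b))"
  using assms unfolding adj_tree_of doubleton_eq_iff by auto

lemma adj_parent: "u \<in> {2..m} \<Longrightarrow> adj (tree_of m w) u (v (w u)) \<and> adj (tree_of m w) (v (w u)) u"
  using not_own_parent[of u] unfolding adj_tree_of by (auto simp: insert_commute)

lemma adj_tree_of_range: "adj (tree_of m w) a b \<Longrightarrow> a \<in> {1..m} \<and> b \<in> {1..m}"
  using adj_tree_of_cases parent_range by fastforce

lemma new_neighbours_eq:
  assumes j: "j < m"
  shows "{x. adj (tree_of m w) (v j) x \<and> x \<notin> A j \<and> x \<notin> set (Q j)} = born_at m w j"
proof (rule set_eqI, rule iffI)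
  fix x assume "x \<in> {x. adj (tree_of m w) (v j) x \<and> x \<notin> A j \<and> x \<notin> set (Q j)}"
  hence ad: "adj (tree_of m w) (v j) x" and xA: "x \<notin> A j" by auto
  show "x \<in> born_at m w j"
    using adj_tree_of_cases[OF ad]
  proof
    assume c: "v j \<in> {2..m} \<and> x = v (w (v j))"
    have "pos (v j) = j" using pos_v[OF j] .
    hence "w (v j) < j" using parent_before[of "v j"] c by simp
    hence "x \<in> A j" using c explored_before[of "w (v j)" j] j by simp
    thus ?thesis using xA by simp
  next
    assume c: "x \<in> {2..m} \<and> v j = v (w x)"
    have "w x < m" using codes_lt[OF ww] c by simp
    hence "w x = j" using c v_eq_iff[OF j] by simp
    thus ?thesis using c by (simp add: born_at_def)
  qed
next
  fix x assume x: "x \<in> born_at m w j"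
  hence x2: "x \<in> {2..m}" and wx: "w x = j" by (auto simp: born_at_def)
  have ad: "adj (tree_of m w) (v j) x" using adj_parent[OF x2] wx by simp
  show "x \<in> {x. adj (tree_of m w) (v j) x \<and> x \<notin> A j \<and> x \<notin> set (Q j)}"
    using ad born_at_unseen[OF x] j by simp
qed

lemma odfs_state_tree_of: "j \<le> m \<Longrightarrow> odfs_state (tree_of m w) j = search m w j"
proof (induction j)
  case 0
  thus ?case by (simp add: odfs_state_def)
next
  case (Suc j)
  hence j: "j < m" by simp
  have "odfs_state (tree_of m w) (Suc j) = odfs_step (tree_of m w) (odfs_state (tree_of m w) j)"
    by (simp add: odfs_state_def)
  also have "\<dots> = odfs_step (tree_of m w) (search m w j)" using Suc by simp
  also have "\<dots> = search m w (Suc j)"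
    using new_neighbours_eq[OF j] by (simp add: odfs_step_def Let_def explored_def born_at_def)
  finally show ?case .
qed

lemma dfw_tree_of: "i < m \<Longrightarrow> dfw (tree_of m w) i = walk m w i"
  using odfs_state_tree_of[of i] length_queue[of i] by (simp add: dfw_def)

text \<open>Following parents, every vertex is connected to the root (induction on pos).\<close>
lemma connected_to_root: "u \<in> {1..m} \<Longrightarrow> (u, 1) \<in> {(a, b). adj (tree_of m w) a b}\<^sup>* \<and> (1, u) \<in> {(a, b). adj (tree_of m w) a b}\<^sup>*"
proof (induction "pos u" arbitrary: u rule: less_induct)
  case less
  show ?case
  proof (cases "u = 1")
    case True thus ?thesis by simp
  next
    case False
    hence u2: "u \<in> {2..m}" using less.prems by auto
    define p where "p = v (w u)"
    have wu: "w u < m" using codes_lt[OF ww u2] .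
    have pp: "pos p = w u" unfolding p_def by (rule pos_v[OF wu])
    have "pos p < pos u" using pp parent_before[OF u2] by simp
    moreover have p1: "p \<in> {1..m}" unfolding p_def by (rule parent_range[OF u2])
    ultimately have ih: "(p, 1) \<in> {(a, b). adj (tree_of m w) a b}\<^sup>* \<and> (1, p) \<in> {(a, b). adj (tree_of m w) a b}\<^sup>*"
      using less.hyps by blast
    have a1: "(u, p) \<in> {(a, b). adj (tree_of m w) a b}" and a2: "(p, u) \<in> {(a, b). adj (tree_of m w) a b}"
      using adj_parent[OF u2] by (auto simp: p_def)
    show ?thesis using ih a1 a2
      by (meson converse_rtrancl_into_rtrancl rtrancl_into_rtrancl)
  qed
qed

lemma adj_down:
  assumes ad: "adj (tree_of m w) a b" and lt: "pos b < pos a"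
  shows "b = v (w a)"
  using adj_tree_of_cases[OF ad]
proof
  assume c: "b \<in> {2..m} \<and> a = v (w b)"
  have "w b < m" using codes_lt[OF ww] c by simp
  hence "pos a = w b" using c pos_v by simp
  hence "pos a < pos b" using parent_before c by simp
  thus ?thesis using lt by simp
qed simp

lemma pos_inj: "a \<in> {1..m} \<Longrightarrow> b \<in> {1..m} \<Longrightarrow> pos a = pos b \<Longrightarrow> a = b"
  by (metis v_pos)

text \<open>No cycles: the last explored vertex of a cycle would have both cycle neighbours as parent.\<close>
lemma tree_of_acyclic: "\<not> is_cycle (tree_of m w) vs"
proof
  assume cyc: "is_cycle (tree_of m w) vs"
  define n where "n = length vs"
  have n3: "3 \<le> n" and dv: "distinct vs"
    and ad: "\<And>i. i < n \<Longrightarrow> adj (tree_of m w) (vs ! i) (vs ! ((i + 1) mod n))"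
    using cyc unfolding is_cycle_def n_def by auto
  have inm: "vs ! i \<in> {1..m}" if "i < n" for i
    using adj_tree_of_range[OF ad[OF that]] by simp
  define M where "M = Max ((\<lambda>i. pos (vs ! i)) ` {..<n})"
  have "0 \<in> {..<n}" using n3 by simp
  hence "(\<lambda>i. pos (vs ! i)) ` {..<n} \<noteq> {}" by blast
  hence "M \<in> (\<lambda>i. pos (vs ! i)) ` {..<n}" unfolding M_def by (intro Max_in) auto
  then obtain k where k: "k < n" "pos (vs ! k) = M" by auto
  have kmax: "pos (vs ! i) \<le> pos (vs ! k)" if "i < n" for i
  proof -
    have "pos (vs ! i) \<le> M" unfolding M_def using that by (intro Max_ge) auto
    thus ?thesis using k by simp
  qed
  define s where "s = (if k = n - 1 then 0 else k + 1)"
  define p where "p = (if k = 0 then n - 1 else k - 1)"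
  have s_eq: "s = (k + 1) mod n" using k n3 by (auto simp: s_def)
  have p_eq: "(p + 1) mod n = k" using k n3 by (auto simp: p_def)
  have sn: "s < n" "p < n" using k n3 by (auto simp: s_def p_def)
  have sk: "s \<noteq> k" "p \<noteq> k" "s \<noteq> p" using k n3 by (auto simp: s_def p_def)
  have lt: "pos (vs ! j) < pos (vs ! k)" if "j < n" "j \<noteq> k" for j
  proof -
    have "vs ! j \<noteq> vs ! k" using dv that k by (simp add: nth_eq_iff_index_eq n_def)
    hence "pos (vs ! j) \<noteq> pos (vs ! k)" using pos_inj inm that k by blast
    thus ?thesis using kmax[OF that(1)] by simp
  qed
  have a1: "adj (tree_of m w) (vs ! k) (vs ! s)" using ad[OF k(1)] s_eq by simp
  have a2: "adj (tree_of m w) (vs ! k) (vs ! p)" using adj_sym[OF ad[OF sn(2)]] p_eq by simp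
  have "vs ! s = v (w (vs ! k))" by (rule adj_down[OF a1 lt[OF sn(1) sk(1)]])
  moreover have "vs ! p = v (w (vs ! k))" by (rule adj_down[OF a2 lt[OF sn(2) sk(2)]])
  ultimately have "vs ! s = vs ! p" by simp
  thus False using dv sn sk by (simp add: nth_eq_iff_index_eq n_def)
qed

lemma tree_of_tree: "tree_of m w \<in> trees m"
  unfolding trees_def is_tree_def
proof (intro CollectI conjI ballI)
  fix e assume "e \<in> tree_of m w"
  then obtain u where u: "u \<in> {2..m}" and e: "e = {u, v (w u)}" unfolding tree_of_def by auto
  show "e \<subseteq> {1..m}" using u parent_range[OF u] e by auto
  show "card e = 2" using not_own_parent[OF u] e by simp
next
  fix a b assume a: "a \<in> {1..m}" and b: "b \<in> {1..m}"
  show "(a, b) \<in> {(a, b). adj (tree_of m w) a b}\<^sup>*"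
    using connected_to_root[OF a] connected_to_root[OF b] by (meson rtrancl_trans)
next
  show "\<nexists>vs. is_cycle (tree_of m w) vs" using tree_of_acyclic by blast
qed

lemma born_before_eq: "j \<le> m \<Longrightarrow> born_before m w j = (set (Q j) \<union> A j) - {1}"
  using queue_explored_eq[of j] by (auto simp: born_before_def)

end

text \<open>A valid code is determined by its tree, since the search recovers the birth sets.\<close>
lemma tree_of_inj:
  assumes "valid_code m w" "valid_code m w'" and eq: "tree_of m w = tree_of m w'"
  shows "w = w'"
proof -
  interpret a: valid_code m w by fact
  interpret b: valid_code m w' by fact
  have K: "born_before m w j = born_before m w' j" if "j \<le> m" for j
    using a.born_before_eq[OF that] b.born_before_eq[OF that] a.odfs_state_tree_of[OF that] b.odfs_state_tree_of[OF that] eq by simp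
  have le: "y u \<le> x u" if "valid_code m x" "valid_code m y" "\<And>j. j \<le> m \<Longrightarrow> born_before m x j = born_before m y j" "u \<in> {2..m}" for x y u
  proof -
    interpret c: valid_code m x by fact
    have "x u < m" using codes_lt[OF c.ww that(4)] .
    hence "u \<in> born_before m x (Suc (x u))" using that(4) by (simp add: born_before_def)
    hence "u \<in> born_before m y (Suc (x u))" using that(3)[of "Suc (x u)"] \<open>x u < m\<close> by simp
    thus ?thesis by (simp add: born_before_def)
  qed
  show ?thesis
  proof
    fix u show "w u = w' u"
    proof (cases "u \<in> {2..m}")
      case True
      thus ?thesis using le[OF assms(1,2) K True] le[OF assms(2,1) _ True] K by (metis le_antisym)
    next
      case False
      thus ?thesis using a.ww b.ww by (auto simp: codes_def PiE_def extensional_def)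
    qed
  qed
qed


section \<open>The code of a tree\<close>

lemma rtrancl_path_nth:
  "rtrancl_path r x xs y \<Longrightarrow> (\<forall>i < length xs. r ((x # xs) ! i) ((x # xs) ! Suc i)) \<and> last (x # xs) = y"
proof (induction rule: rtrancl_path.induct)
  case (base x) thus ?case by simp
next
  case (step x y ys z)
  have "r ((x # y # ys) ! i) ((x # y # ys) ! Suc i)" if "i < length (y # ys)" for i
    using step that by (cases i) auto
  thus ?case using step by simp
qed

lemma path_closes_cycle:
  assumes p: "rtrancl_path (\<lambda>x y. adj G x y) a ys b" and d: "distinct (a # ys)"
    and len: "2 \<le> length ys" and sub: "G \<subseteq> E" and ab: "{a, b} \<in> E"
  shows "is_cycle E (a # ys)"
  unfolding is_cycle_def
proof (intro conjI allI impI)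
  define vs where "vs = a # ys"
  have pn: "\<forall>i < length ys. adj G (vs ! i) (vs ! Suc i)" and lst: "last vs = b"
    using rtrancl_path_nth[OF p] by (auto simp: vs_def)
  show "3 \<le> length (a # ys)" "distinct (a # ys)" using len d by simp_all
  fix i assume i: "i < length (a # ys)"
  show "adj E ((a # ys) ! i) ((a # ys) ! ((i + 1) mod length (a # ys)))"
  proof (cases "i + 1 < length vs")
    case True
    thus ?thesis using pn adj_mono[OF sub] by (simp add: vs_def)
  next
    case False
    hence ii: "i + 1 = length vs" using i by (simp add: vs_def)
    have "vs ! i = b" using lst ii last_conv_nth[of vs] by (simp add: vs_def)
    moreover have "b \<in> set ys" using lst len by (cases ys) (auto simp: vs_def)
    hence "adj E b a" using ab d by (auto simp: adj_def insert_commute)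
    ultimately show ?thesis using ii by (simp add: vs_def)
  qed
qed

text \<open>In an acyclic graph, a connected spanning subgraph already contains every edge: the path
  between the ends of a missing edge would close a cycle.\<close>
lemma connected_subgraph_eq:
  assumes sub: "G \<subseteq> E" and edges: "\<forall>e\<in>E. e \<subseteq> V \<and> card e = 2"
    and conn: "\<forall>a\<in>V. \<forall>b\<in>V. (a, b) \<in> {(x, y). adj G x y}\<^sup>*" and acyc: "\<nexists>vs. is_cycle E vs"
  shows "G = E"
proof (rule antisym[OF sub], rule subsetI, rule ccontr)
  fix e assume eE: "e \<in> E" and eG: "e \<notin> G"
  obtain a b where e: "e = {a, b}" "a \<noteq> b" using edges eE unfolding card_2_iff by blast
  hence "a \<in> V" "b \<in> V" using edges eE by auto
  hence "(a, b) \<in> {(x, y). adj G x y}\<^sup>*" using conn by blast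
  hence "(\<lambda>x y. adj G x y)\<^sup>*\<^sup>* a b" by (rule iffD2[OF rtranclp_rtrancl_eq])
  then obtain xs where "rtrancl_path (\<lambda>x y. adj G x y) a xs b"
    using rtranclp_eq_rtrancl_path by metis
  then obtain ys where p: "rtrancl_path (\<lambda>x y. adj G x y) a ys b" and d: "distinct (a # ys)"
    by (rule rtrancl_path_distinct)
  have pn: "\<forall>i < length ys. adj G ((a # ys) ! i) ((a # ys) ! Suc i)" and lst: "last (a # ys) = b"
    using rtrancl_path_nth[OF p] by auto
  have "2 \<le> length ys"
  proof (rule ccontr)
    assume "\<not> 2 \<le> length ys"
    moreover have "length ys \<noteq> 0" using lst e by auto
    ultimately have "length ys = 1" by linarith
    then obtain c where "ys = [c]" by (cases ys) auto
    hence "adj G a b" using pn lst by auto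
    thus False using eG e by (simp add: adj_def)
  qed
  hence "is_cycle E (a # ys)" using path_closes_cycle[OF p d _ sub] eE e by simp
  thus False using acyc by blast
qed

locale labelled_tree =
  fixes m :: nat and E :: "nat set set"
  assumes m1: "1 \<le> m" and Et: "E \<in> trees m"
begin

abbreviation "QT j \<equiv> fst (odfs_state E j)"
abbreviation "AT j \<equiv> snd (odfs_state E j)"
abbreviation "Disc j \<equiv> set (QT j) \<union> AT j"

definition new_nbrs :: "nat \<Rightarrow> nat set" where
  "new_nbrs j = {x. adj E (hd (QT j)) x \<and> x \<notin> AT j \<and> x \<notin> set (QT j)}"

lemma edge_props: "e \<in> E \<Longrightarrow> e \<subseteq> {1..m} \<and> card e = 2"
  using Et unfolding trees_def is_tree_def by blast

lemma adj_range: "adj E a b \<Longrightarrow> a \<in> {1..m} \<and> b \<in> {1..m}"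
  using edge_props unfolding adj_def by blast

lemma connected: "a \<in> {1..m} \<Longrightarrow> b \<in> {1..m} \<Longrightarrow> (a, b) \<in> {(a, b). adj E a b}\<^sup>*"
  using Et unfolding trees_def is_tree_def by blast

lemma acyclic: "\<not> is_cycle E vs"
  using Et unfolding trees_def is_tree_def by blast

lemma new_nbrs_sub: "new_nbrs j \<subseteq> {1..m}"
  unfolding new_nbrs_def using adj_range by blast

lemma finite_new_nbrs: "finite (new_nbrs j)"
  using new_nbrs_sub finite_subset by blast

lemma odfs_state_Suc: "odfs_state E (Suc j) = (sorted_list_of_set (new_nbrs j) @ tl (QT j), insert (hd (QT j)) (AT j))"
  by (simp add: odfs_state_def odfs_step_def Let_def new_nbrs_def)

definition dfs_inv :: "nat \<Rightarrow> bool" where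
  "dfs_inv j \<longleftrightarrow> distinct (QT j) \<and> set (QT j) \<inter> AT j = {} \<and> Disc j \<subseteq> {1..m} \<and> 1 \<in> Disc j
     \<and> card (AT j) = j \<and> finite (AT j) \<and> (\<forall>a\<in>AT j. \<forall>x. adj E a x \<longrightarrow> x \<in> Disc j)"

lemma dfs_inv_0: "dfs_inv 0"
  using m1 by (simp add: dfs_inv_def odfs_state_def)

lemma Disc_Suc: "QT j \<noteq> [] \<Longrightarrow> Disc (Suc j) = Disc j \<union> new_nbrs j"
proof -
  assume ne: "QT j \<noteq> []"
  have "set (QT j) = insert (hd (QT j)) (set (tl (QT j)))" using ne by (cases "QT j") auto
  thus ?thesis unfolding odfs_state_Suc using finite_new_nbrs by auto
qed

lemma new_nbrs_disj: "new_nbrs j \<inter> Disc j = {}"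
  unfolding new_nbrs_def by auto

text \<open>Every neighbour of an explored vertex has been discovered: the newly explored vertex
  discovers all its unseen neighbours.\<close>
lemma explored_closed_Suc:
  assumes cl: "\<forall>a\<in>AT j. \<forall>x. adj E a x \<longrightarrow> x \<in> Disc j" and ne: "QT j \<noteq> []"
  shows "\<forall>a\<in>AT (Suc j). \<forall>x. adj E a x \<longrightarrow> x \<in> Disc (Suc j)"
proof (intro ballI allI impI)
  fix a x assume a: "a \<in> AT (Suc j)" and ax: "adj E a x"
  have DS: "Disc (Suc j) = Disc j \<union> new_nbrs j" by (rule Disc_Suc[OF ne])
  show "x \<in> Disc (Suc j)"
  proof (cases "a = hd (QT j)")
    case True
    thus ?thesis using ax unfolding DS new_nbrs_def by blast
  next
    case False
    hence "a \<in> AT j" using a by (simp add: odfs_state_Suc)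
    thus ?thesis using cl ax unfolding DS by blast
  qed
qed

lemma dfs_inv_Suc:
  assumes inv: "dfs_inv j" and ne: "QT j \<noteq> []"
  shows "dfs_inv (Suc j)"
proof -
  define Q where "Q = QT j"
  define A where "A = AT j"
  have Qeq: "Q = hd Q # tl Q" using ne by (simp add: Q_def)
  have dQ: "distinct Q" and dis: "set Q \<inter> A = {}" and sub: "set Q \<union> A \<subseteq> {1..m}"
    and one: "1 \<in> set Q \<union> A" and cA: "card A = j" and fA: "finite A"
    using inv unfolding dfs_inv_def Q_def[symmetric] A_def[symmetric] by blast+
  have NQ: "new_nbrs j \<inter> set Q = {}" and NA: "new_nbrs j \<inter> A = {}"
    unfolding new_nbrs_def Q_def A_def by auto
  have hd_tl: "hd Q \<in> set Q" "set (tl Q) \<subseteq> set Q" "hd Q \<notin> set (tl Q)"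
    using dQ Qeq by (metis list.set_intros(1), metis set_subset_Cons, metis distinct.simps(2))
  have hdA: "hd Q \<notin> A" using hd_tl dis by blast
  have DS: "Disc (Suc j) = set Q \<union> A \<union> new_nbrs j" using Disc_Suc[OF ne] by (simp add: Q_def A_def)
  have s: "QT (Suc j) = sorted_list_of_set (new_nbrs j) @ tl Q" "AT (Suc j) = insert (hd Q) A"
    unfolding odfs_state_Suc by (simp_all add: Q_def A_def)
  have "distinct (QT (Suc j))" unfolding s using dQ NQ hd_tl finite_new_nbrs by (auto simp: distinct_tl)
  moreover have "set (QT (Suc j)) \<inter> AT (Suc j) = {}"
    unfolding s using NQ NA hd_tl dis finite_new_nbrs by auto
  moreover have "Disc (Suc j) \<subseteq> {1..m}" "1 \<in> Disc (Suc j)"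
    unfolding DS using sub one new_nbrs_sub by blast+
  moreover have "card (AT (Suc j)) = Suc j" "finite (AT (Suc j))"
    unfolding s using fA cA hdA by simp_all
  moreover have "\<forall>a\<in>AT (Suc j). \<forall>x. adj E a x \<longrightarrow> x \<in> Disc (Suc j)"
    using explored_closed_Suc[OF _ ne] inv unfolding dfs_inv_def by blast
  ultimately show ?thesis unfolding dfs_inv_def by blast
qed

lemma closed_reachable:
  assumes "1 \<in> S" "\<forall>a\<in>S. \<forall>x. adj E a x \<longrightarrow> x \<in> S" "(1, z) \<in> {(a, b). adj E a b}\<^sup>*"
  shows "z \<in> S"
  using assms(3)
proof (induction rule: rtrancl_induct)
  case base thus ?case using assms(1) .
next
  case (step y z) thus ?case using assms(2) by blast
qed

lemma dfs_inv_all: "j \<le> m \<Longrightarrow> dfs_inv j \<and> (j < m \<longrightarrow> QT j \<noteq> [])"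
proof (induction j)
  case 0
  have "QT 0 = [1]" by (simp add: odfs_state_def)
  thus ?case using dfs_inv_0 by simp
next
  case (Suc j)
  hence inv: "dfs_inv (Suc j)" using dfs_inv_Suc by simp
  moreover have "QT (Suc j) \<noteq> []" if sm: "Suc j < m"
  proof
    assume emp: "QT (Suc j) = []"
    hence cl: "\<forall>a\<in>AT (Suc j). \<forall>x. adj E a x \<longrightarrow> x \<in> AT (Suc j)" and one: "1 \<in> AT (Suc j)"
      using inv unfolding dfs_inv_def by simp_all
    have sub: "AT (Suc j) \<subseteq> {1..m}" and "card (AT (Suc j)) = Suc j"
      using inv unfolding dfs_inv_def by auto
    hence "AT (Suc j) \<noteq> {1..m}" using sm by auto
    then obtain z where z: "z \<in> {1..m}" "z \<notin> AT (Suc j)" using sub by blast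
    hence "(1, z) \<in> {(a, b). adj E a b}\<^sup>*" using connected m1 by simp
    thus False using closed_reachable[OF one cl] z by blast
  qed
  ultimately show ?case by simp
qed

lemma queue_nonempty: "j < m \<Longrightarrow> QT j \<noteq> []" using dfs_inv_all by simp
lemma dfs_invariant: "j \<le> m \<Longrightarrow> dfs_inv j" using dfs_inv_all by simp

lemma Disc_mono: "i \<le> j \<Longrightarrow> j \<le> m \<Longrightarrow> Disc i \<subseteq> Disc j"
proof (induction j)
  case 0 thus ?case by simp
next
  case (Suc j)
  show ?case
  proof (cases "i = Suc j")
    case True thus ?thesis by simp
  next
    case False
    hence "Disc i \<subseteq> Disc j" using Suc by simp
    also have "Disc j \<subseteq> Disc (Suc j)" using Disc_Suc[OF queue_nonempty[of j]] Suc by simp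
    finally show ?thesis .
  qed
qed

lemma Disc_0: "Disc 0 = {1}" by (simp add: odfs_state_def)

lemma Disc_m: "Disc m = {1..m}"
proof -
  have sub: "AT m \<subseteq> {1..m}" and cA: "card (AT m) = m" and sub2: "Disc m \<subseteq> {1..m}"
    using dfs_invariant[of m] unfolding dfs_inv_def by auto
  have "AT m = {1..m}" using sub cA by (intro card_subset_eq) auto
  thus ?thesis using sub2 by auto
qed

text \<open>The code of E: each non-root vertex is mapped to the step at which it is discovered,
  i.e. the time at which its parent is explored.\<close>
definition code_of :: "nat \<Rightarrow> nat" where
  "code_of u = (if u \<in> {2..m} then (LEAST j. u \<in> Disc (Suc j)) else undefined)"

lemma code_of_props:
  assumes u: "u \<in> {2..m}"
  shows "code_of u < m" "u \<in> Disc (Suc (code_of u))" "u \<notin> Disc (code_of u)"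
proof -
  have m2: "Suc (m - 1) = m" using m1 by simp
  have ex: "u \<in> Disc (Suc (m - 1))" using Disc_m u m2 by simp
  have "(LEAST j. u \<in> Disc (Suc j)) \<le> m - 1" by (rule Least_le) (rule ex)
  hence le: "code_of u \<le> m - 1" unfolding code_of_def using u by simp
  thus "code_of u < m" using m1 by simp
  show "u \<in> Disc (Suc (code_of u))" unfolding code_of_def using u LeastI[of "\<lambda>j. u \<in> Disc (Suc j)", OF ex] by simp
  show "u \<notin> Disc (code_of u)"
  proof (cases "code_of u")
    case 0 thus ?thesis using Disc_0 u by simp
  next
    case (Suc k)
    have "\<not> u \<in> Disc (Suc k)"
      using not_less_Least[of k "\<lambda>j. u \<in> Disc (Suc j)"] Suc u unfolding code_of_def by simp
    thus ?thesis using Suc by simp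
  qed
qed

lemma code_of_codes: "code_of \<in> codes m"
  unfolding codes_def using code_of_props(1) by (auto simp: code_of_def)

lemma new_nbrs_eq: "j < m \<Longrightarrow> new_nbrs j = born_at m code_of j"
proof (rule set_eqI, rule iffI)
  fix x assume j: "j < m" and x: "x \<in> new_nbrs j"
  have xD: "x \<in> Disc (Suc j)" "x \<notin> Disc j" using x Disc_Suc[OF queue_nonempty[OF j]] new_nbrs_disj[of j] by auto
  have one: "1 \<in> Disc j" using dfs_invariant[of j] j unfolding dfs_inv_def by simp
  have "x \<in> {1..m}" using new_nbrs_sub x by blast
  moreover have "x \<noteq> 1" using one xD by blast
  ultimately have x2: "x \<in> {2..m}" by auto
  have "(LEAST j. x \<in> Disc (Suc j)) \<le> j" by (rule Least_le) (rule xD(1))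
  hence le: "code_of x \<le> j" unfolding code_of_def using x2 by simp
  have "\<not> code_of x < j"
  proof
    assume "code_of x < j"
    hence "Disc (Suc (code_of x)) \<subseteq> Disc j" using j by (intro Disc_mono) auto
    thus False using code_of_props(2)[OF x2] xD by blast
  qed
  thus "x \<in> born_at m code_of j" using le x2 by (simp add: born_at_def)
next
  fix x assume j: "j < m" and x: "x \<in> born_at m code_of j"
  hence x2: "x \<in> {2..m}" and wx: "code_of x = j" by (auto simp: born_at_def)
  have "x \<in> Disc (Suc j)" "x \<notin> Disc j" using code_of_props[OF x2] wx by auto
  thus "x \<in> new_nbrs j" using Disc_Suc[OF queue_nonempty[OF j]] by auto
qed

lemma odfs_state_code: "j \<le> m \<Longrightarrow> odfs_state E j = search m code_of j"
proof (induction j)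
  case 0 thus ?case by (simp add: odfs_state_def)
next
  case (Suc j)
  hence j: "j < m" and ih: "odfs_state E j = search m code_of j" by auto
  show ?case unfolding odfs_state_Suc using ih new_nbrs_eq[OF j] by (simp add: born_at_def)
qed

lemma code_of_valid: "valid m code_of"
proof -
  have search_inv_all: "search_inv m code_of j" if "j \<le> m" for j
    using that
  proof (induction j)
    case 0 show ?case by (rule search_inv_0)
  next
    case (Suc j)
    hence "search_inv m code_of j" "j < m" by auto
    moreover have "fst (search m code_of j) \<noteq> []" using queue_nonempty[OF \<open>j < m\<close>] odfs_state_code[of j] \<open>j < m\<close> by simp
    ultimately show ?case using search_inv_Suc by blast
  qed
  show ?thesis unfolding valid_def
  proof (intro allI impI)
    fix i assume i: "i < m"
    have "int (length (fst (search m code_of i))) = 1 + walk m code_of i" using search_inv_all[of i] i unfolding search_inv_def by simp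
    moreover have "fst (search m code_of i) \<noteq> []" using queue_nonempty[OF i] odfs_state_code[of i] i by simp
    ultimately show "0 \<le> walk m code_of i" by (cases "fst (search m code_of i)") auto
  qed
qed

lemma code_of_valid_code: "valid_code m code_of"
  by unfold_locales (use m1 code_of_codes code_of_valid in auto)

text \<open>Each edge of the tree of the code joins a vertex to the vertex that discovered it.\<close>
lemma tree_of_code_sub: "tree_of m code_of \<subseteq> E"
proof
  fix e assume "e \<in> tree_of m code_of"
  then obtain u where u: "u \<in> {2..m}" and e: "e = {u, explored m code_of (code_of u)}" unfolding tree_of_def by auto
  define j where "j = code_of u"
  have j: "j < m" using code_of_props(1)[OF u] by (simp add: j_def)
  have "u \<in> new_nbrs j" using new_nbrs_eq[OF j] u by (simp add: born_at_def j_def)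
  hence "adj E (hd (QT j)) u" unfolding new_nbrs_def by simp
  moreover have "hd (QT j) = explored m code_of j" using odfs_state_code[of j] j by (simp add: explored_def)
  ultimately show "e \<in> E" using e by (simp add: adj_def j_def insert_commute)
qed

lemma tree_of_code_eq: "tree_of m code_of = E"
proof (rule connected_subgraph_eq[OF tree_of_code_sub])
  interpret G: valid_code m code_of by (rule code_of_valid_code)
  have "is_tree {1..m} (tree_of m code_of)" using G.tree_of_tree by (simp add: trees_def)
  thus "\<forall>a\<in>{1..m}. \<forall>b\<in>{1..m}. (a, b) \<in> {(x, y). adj (tree_of m code_of) x y}\<^sup>*"
    unfolding is_tree_def by blast
  show "\<forall>e\<in>E. e \<subseteq> {1..m} \<and> card e = 2" using edge_props by blast
  show "\<nexists>vs. is_cycle E vs" using acyclic by blast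
qed

end




section \<open>Valid codes versus trees\<close>

lemma tree_of_bij:
  assumes m: "1 \<le> m"
  shows "bij_betw (tree_of m) {w\<in>codes m. valid m w} (trees m)"
proof (rule bij_betw_imageI)
  show "inj_on (tree_of m) {w\<in>codes m. valid m w}"
  proof (rule inj_onI)
    fix w1 w2 assume w1: "w1 \<in> {w\<in>codes m. valid m w}" and w2: "w2 \<in> {w\<in>codes m. valid m w}"
      and eq: "tree_of m w1 = tree_of m w2"
    have "valid_code m w1" using m w1 by unfold_locales auto
    moreover have "valid_code m w2" using m w2 by unfold_locales auto
    ultimately show "w1 = w2" using tree_of_inj eq by blast
  qed
  show "tree_of m ` {w\<in>codes m. valid m w} = trees m"
  proof (intro equalityI subsetI)
    fix E assume "E \<in> tree_of m ` {w\<in>codes m. valid m w}"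
    then obtain w where w: "w \<in> codes m" "valid m w" and E: "E = tree_of m w" by auto
    interpret valid_code m w using m w by unfold_locales
    show "E \<in> trees m" using tree_of_tree E by simp
  next
    fix E assume E: "E \<in> trees m"
    interpret labelled_tree m E using m E by unfold_locales
    have "E = tree_of m code_of" using tree_of_code_eq by simp
    moreover have "code_of \<in> {w\<in>codes m. valid m w}" using code_of_codes code_of_valid by simp
    ultimately show "E \<in> tree_of m ` {w\<in>codes m. valid m w}" by blast
  qed
qed

lemma dfw_norm_tree_of:
  fixes z :: real
  assumes m: "1 \<le> m" and w: "w \<in> codes m" "valid m w"
  shows "z \<le> dfw_norm m (tree_of m w) \<longleftrightarrow> (\<exists>i<m. z \<le> real_of_int (walk m w i))"
proof -
  interpret valid_code m w using m w by unfold_locales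
  have "dfw (tree_of m w) ` {0..<m} = walk m w ` {0..<m}"
    using dfw_tree_of by (auto simp: image_iff)
  hence norm: "dfw_norm m (tree_of m w) = real_of_int (Max (walk m w ` {0..<m}))"
    by (simp add: dfw_norm_def)
  let ?M = "Max (walk m w ` {0..<m})"
  have fin: "finite (walk m w ` {0..<m})" "walk m w ` {0..<m} \<noteq> {}" using m by auto
  have "?M \<in> walk m w ` {0..<m}" using fin by (rule Max_in)
  then obtain i0 where i0: "i0 < m" "?M = walk m w i0" by auto
  have upper: "walk m w i \<le> ?M" if "i < m" for i
    using fin(1) that by (intro Max_ge) auto
  show ?thesis unfolding norm
  proof
    assume "z \<le> real_of_int ?M"
    thus "\<exists>i<m. z \<le> real_of_int (walk m w i)" using i0 by (intro exI[of _ i0]) simp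
  next
    assume "\<exists>i<m. z \<le> real_of_int (walk m w i)"
    then obtain i where "i < m" "z \<le> real_of_int (walk m w i)" by blast
    moreover have "real_of_int (walk m w i) \<le> real_of_int ?M" using upper[OF \<open>i < m\<close>] by simp
    ultimately show "z \<le> real_of_int ?M" by linarith
  qed
qed

lemma card_valid_pos:
  assumes m: "1 \<le> m"
  shows "0 < card {w\<in>codes m. valid m w}"
proof -
  have "0 < m ^ (m - 1)" using m by simp
  hence "0 < m * card {w\<in>codes m. valid m w}" using card_valid_lower[OF m] by linarith
  thus ?thesis by simp
qed

lemma prob_dfw_norm:
  fixes z :: real
  assumes m: "1 \<le> m"
  shows "measure_pmf.prob (pmf_of_set (trees m)) {E. z \<le> dfw_norm m E}
    = real (card {w\<in>codes m. valid m w \<and> (\<exists>i<m. z \<le> real_of_int (walk m w i))})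
      / real (card {w\<in>codes m. valid m w})"
proof -
  let ?V = "{w\<in>codes m. valid m w}"
  have bij: "bij_betw (tree_of m) ?V (trees m)" by (rule tree_of_bij[OF m])
  have finV: "finite ?V" using finite_codes by simp
  have finT: "finite (trees m)" using bij_betw_finite[OF bij] finV by simp
  have cardT: "card (trees m) = card ?V" by (rule bij_betw_same_card[OF bij, symmetric])
  hence neT: "trees m \<noteq> {}" using card_valid_pos[OF m] by (metis card.empty less_irrefl)
  have "trees m \<inter> {E. z \<le> dfw_norm m E} = tree_of m ` {w\<in>?V. z \<le> dfw_norm m (tree_of m w)}"
    unfolding bij_betw_imp_surj_on[OF bij, symmetric] by auto
  moreover have "{w\<in>?V. z \<le> dfw_norm m (tree_of m w)} = {w\<in>?V. \<exists>i<m. z \<le> real_of_int (walk m w i)}"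
  proof (rule Collect_cong)
    fix w show "(w \<in> ?V \<and> z \<le> dfw_norm m (tree_of m w)) \<longleftrightarrow> (w \<in> ?V \<and> (\<exists>i<m. z \<le> real_of_int (walk m w i)))"
      using dfw_norm_tree_of[OF m, of w z] by auto
  qed
  ultimately have eq: "trees m \<inter> {E. z \<le> dfw_norm m E} = tree_of m ` {w\<in>?V. \<exists>i<m. z \<le> real_of_int (walk m w i)}"
    by simp
  have "inj_on (tree_of m) {w\<in>?V. \<exists>i<m. z \<le> real_of_int (walk m w i)}"
    by (rule inj_on_subset[OF bij_betw_imp_inj_on[OF bij]]) blast
  hence "card (trees m \<inter> {E. z \<le> dfw_norm m E}) = card {w\<in>?V. \<exists>i<m. z \<le> real_of_int (walk m w i)}"
    unfolding eq by (rule card_image)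
  thus ?thesis using measure_pmf_of_set[OF neT finT] cardT by simp
qed

lemma valid_tail_bound:
  fixes z :: real
  assumes m: "1 \<le> m" and z: "0 \<le> z"
  shows "real (card {w\<in>codes m. valid m w \<and> (\<exists>i<m. z \<le> real_of_int (walk m w i))})
    \<le> 16 * exp 16 * exp (- ((z / 2)\<^sup>2 / (1024 * real m))) * real (card {w\<in>codes m. valid m w})"
proof -
  define K where "K = 16 * exp 16 * exp (- ((z / 2)\<^sup>2 / (1024 * real m)))"
  define B where "B = {w\<in>codes m. valid m w \<and> (\<exists>i<m. z \<le> real_of_int (walk m w i))}"
  define V where "V = {w\<in>codes m. valid m w}"
  have "real (m ^ (m - 1)) \<le> real (m * card V)"
    using card_valid_lower[OF m] unfolding V_def by (simp only: of_nat_le_iff)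
  hence lower: "real m ^ (m - 1) \<le> real m * real (card V)" by simp
  have "z \<le> 2 * \<bar>real_of_int (walk m u i)\<bar> \<longleftrightarrow> z / 2 \<le> \<bar>real_of_int (walk m u i)\<bar>" for u i
    by linarith
  hence "{u\<in>codes m. \<exists>i\<le>m. z \<le> 2 * \<bar>real_of_int (walk m u i)\<bar>}
      = {u\<in>codes m. \<exists>i\<le>m. z / 2 \<le> \<bar>real_of_int (walk m u i)\<bar>}" by (simp only:)
  hence "real (m * card B) \<le> real (card {u\<in>codes m. \<exists>i\<le>m. z / 2 \<le> \<bar>real_of_int (walk m u i)\<bar>})"
    using card_valid_bad[OF m, of z] unfolding B_def by (simp only: of_nat_le_iff)
  also have "\<dots> \<le> K * real m ^ (m - 1)"
    using max_ineq[OF m, of "z / 2"] z by (simp add: K_def)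
  also have "\<dots> \<le> K * (real m * real (card V))"
    using lower by (intro mult_left_mono) (simp_all add: K_def)
  finally have "real m * real (card B) \<le> real m * (K * real (card V))" by (simp add: mult_ac)
  hence "real (card B) \<le> K * real (card V)" using m by simp
  thus ?thesis unfolding K_def B_def V_def .
qed

theorem lemma5:
  shows "\<exists>C::real. C \<ge> 0 \<and> (\<exists>\<alpha>::real. \<alpha> > 0 \<and>
     (\<forall>m::nat. m \<ge> 1 \<longrightarrow> (\<forall>x::real. x \<ge> 0 \<longrightarrow>
        measure_pmf.prob (pmf_of_set (trees m)) {E. dfw_norm m E \<ge> x * sqrt (real m)}
          \<le> C * exp (- \<alpha> * x\<^sup>2))))"
proof (intro exI conjI allI impI)
  show "(0::real) \<le> 16 * exp 16" and "(0::real) < 1 / 4096" by simp_all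
  fix m :: nat and x :: real
  assume m: "1 \<le> m" and x: "0 \<le> x"
  define z where "z = x * sqrt (real m)"
  have "measure_pmf.prob (pmf_of_set (trees m)) {E. z \<le> dfw_norm m E}
      = real (card {w\<in>codes m. valid m w \<and> (\<exists>i<m. z \<le> real_of_int (walk m w i))})
        / real (card {w\<in>codes m. valid m w})"
    by (rule prob_dfw_norm[OF m])
  also have "\<dots> \<le> 16 * exp 16 * exp (- ((z / 2)\<^sup>2 / (1024 * real m)))"
    using valid_tail_bound[OF m, of z] card_valid_pos[OF m] x by (simp add: z_def pos_divide_le_eq)
  also have "\<dots> = 16 * exp 16 * exp (- (1 / 4096) * x\<^sup>2)"
    using m by (simp add: z_def power_mult_distrib power_divide field_simps)
  finally show "measure_pmf.prob (pmf_of_set (trees m)) {E. x * sqrt (real m) \<le> dfw_norm m E}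
      \<le> 16 * exp 16 * exp (- (1 / 4096) * x\<^sup>2)"
    by (simp add: z_def)
qed

end
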